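(* The $\mathrm{LTL}$ formula $\mathsf F\,p$ (equivalent to the $\mathrm{CTL}$ formula $\forall\mathsf F\,p$) cannot be expressed in either $\mathrm{HS}_{\mathsf{ct}}$ or $\mathrm{HS}_{\mathsf{st}}$: there is no $\mathrm{HS}$ formula $\psi$ such that for every finite Kripke structure $K$, $K\models_{\mathsf{st}}\psi$ iff $K\models\mathsf F\,p$, and there is no $\mathrm{HS}$ formula $\psi$ such that for every finite Kripke structure $K$, $K\models_{\mathsf{ct}}\psi$ iff $K\models\mathsf F\,p$.
   Context: A Kripke structure over a finite set $\mathcal{AP}$ (containing $p$) is $K=(\mathcal{AP},S,\delta,\mu,s_0)$ with states $S$, left-total $\delta\subseteq S\times S$, labelling $\mu:S\to2^{\mathcal{AP}}$, initial state $s_0$; finite if $S$ is finite. Infinite paths are infinite state sequences following $\delta$; traces are their non-empty finite prefixes; initial means starting at $s_0$. $K\models\mathsf F\,p$ iff every initial infinite path $\pi$ has some $i\ge0$ with $p\in\mu(\pi(i))$. For a finite word $w=w(0)\cdots w(n)$, $\mathrm{Pref}(w)=\{w[0,i]\mid0\le i\le n-1\}$, $\mathrm{Suff}(w)=\{w[i,n]\mid1\le i\le n\}$. The computation tree $C(K)$ has as states the initial traces of $K$, initial state $s_0$, labelling $\rho\mapsto\mu(\text{last state of }\rho)$, transitions $(\rho,\rho\cdot s)$. $\mathrm{HS}$ formulas: $\psi::=p\mid\neg\psi\mid\psi\wedge\psi\mid\langle X\rangle\psi$ for the Allen relations $A,L,B,E,D,O$ and inverses; all definable (non-strict semantics) from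 $\langle B\rangle,\langle E\rangle,\langle\bar B\rangle,\langle\bar E\rangle$. State-based semantics over traces: $\rho\models q$ iff $q\in\mu(s)$ for every state $s$ of $\rho$; $\langle B\rangle\psi$: some $\rho'\in\mathrm{Pref}(\rho)$ satisfies $\psi$; $\langle E\rangle\psi$: some $\rho'\in\mathrm{Suff}(\rho)$; $\langle\bar B\rangle\psi$: some trace $\rho'$ with $\rho\in\mathrm{Pref}(\rho')$; $\langle\bar E\rangle\psi$: some trace $\rho'$ with $\rho\in\mathrm{Suff}(\rho')$. $K\models_{\mathsf{st}}\psi$ iff every initial trace satisfies $\psi$; $K\models_{\mathsf{ct}}\psi$ iff $C(K)\models_{\mathsf{st}}\psi$. *)

theory Defs
  imports Main
begin

record ('s, 'ap) kripke =
  states :: "'s set"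
  trans  :: "('s \<times> 's) set"
  lab    :: "'s \<Rightarrow> 'ap set"
  init   :: 's

definition kripke :: "('s, 'ap) kripke \<Rightarrow> bool" where
  "kripke K \<longleftrightarrow> init K \<in> states K \<and> trans K \<subseteq> states K \<times> states K
     \<and> (\<forall>s \<in> states K. \<exists>t. (s, t) \<in> trans K)"

definition finite_kripke :: "('s, 'ap) kripke \<Rightarrow> bool" where
  "finite_kripke K \<longleftrightarrow> kripke K \<and> finite (states K)"

definition is_trace :: "('s, 'ap) kripke \<Rightarrow> 's list \<Rightarrow> bool" where
  "is_trace K \<rho> \<longleftrightarrow> \<rho> \<noteq> [] \<and> set \<rho> \<subseteq> states K
     \<and> (\<forall>i. Suc i < length \<rho> \<longrightarrow> (\<rho> ! i, \<rho> ! Suc i) \<in> trans K)"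

definition initial_trace :: "('s, 'ap) kripke \<Rightarrow> 's list \<Rightarrow> bool" where
  "initial_trace K \<rho> \<longleftrightarrow> is_trace K \<rho> \<and> hd \<rho> = init K"

definition initial_path :: "('s, 'ap) kripke \<Rightarrow> (nat \<Rightarrow> 's) \<Rightarrow> bool" where
  "initial_path K \<pi> \<longleftrightarrow> \<pi> 0 = init K \<and> (\<forall>i. \<pi> i \<in> states K \<and> (\<pi> i, \<pi> (Suc i)) \<in> trans K)"

definition models_F :: "('s, 'ap) kripke \<Rightarrow> 'ap \<Rightarrow> bool" where
  "models_F K p \<longleftrightarrow> (\<forall>\<pi>. initial_path K \<pi> \<longrightarrow> (\<exists>i. p \<in> lab K (\<pi> i)))"

definition Pref :: "'a list \<Rightarrow> 'a list set" where
  "Pref w = {take i w | i. 1 \<le> i \<and> i < length w}"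

definition Suff :: "'a list \<Rightarrow> 'a list set" where
  "Suff w = {drop i w | i. 1 \<le> i \<and> i < length w}"

text \<open>HS formulas over the basic modalities B, E, Bbar, Ebar (all other Allen
  modalities are definable from these under the non-strict semantics).\<close>

datatype 'ap hs =
    Prop 'ap
  | Neg "'ap hs"
  | Conj "'ap hs" "'ap hs"
  | DiaB "'ap hs"
  | DiaE "'ap hs"
  | DiaBbar "'ap hs"
  | DiaEbar "'ap hs"

fun hs_sat :: "('s, 'ap) kripke \<Rightarrow> 's list \<Rightarrow> 'ap hs \<Rightarrow> bool" where
  "hs_sat K \<rho> (Prop q) \<longleftrightarrow> (\<forall>s \<in> set \<rho>. q \<in> lab K s)"
| "hs_sat K \<rho> (Neg \<psi>) \<longleftrightarrow> \<not> hs_sat K \<rho> \<psi>"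
| "hs_sat K \<rho> (Conj \<psi> \<phi>) \<longleftrightarrow> hs_sat K \<rho> \<psi> \<and> hs_sat K \<rho> \<phi>"
| "hs_sat K \<rho> (DiaB \<psi>) \<longleftrightarrow> (\<exists>\<rho>' \<in> Pref \<rho>. hs_sat K \<rho>' \<psi>)"
| "hs_sat K \<rho> (DiaE \<psi>) \<longleftrightarrow> (\<exists>\<rho>' \<in> Suff \<rho>. hs_sat K \<rho>' \<psi>)"
| "hs_sat K \<rho> (DiaBbar \<psi>) \<longleftrightarrow> (\<exists>\<rho>'. is_trace K \<rho>' \<and> \<rho> \<in> Pref \<rho>' \<and> hs_sat K \<rho>' \<psi>)"
| "hs_sat K \<rho> (DiaEbar \<psi>) \<longleftrightarrow> (\<exists>\<rho>'. is_trace K \<rho>' \<and> \<rho> \<in> Suff \<rho>' \<and> hs_sat K \<rho>' \<psi>)"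

definition models_st :: "('s, 'ap) kripke \<Rightarrow> 'ap hs \<Rightarrow> bool" where
  "models_st K \<psi> \<longleftrightarrow> (\<forall>\<rho>. initial_trace K \<rho> \<longrightarrow> hs_sat K \<rho> \<psi>)"

definition comp_tree :: "('s, 'ap) kripke \<Rightarrow> ('s list, 'ap) kripke" where
  "comp_tree K = \<lparr> states = {\<rho>. initial_trace K \<rho>},
                  trans = {(\<rho>, \<rho> @ [s]) | \<rho> s. initial_trace K \<rho> \<and> initial_trace K (\<rho> @ [s])},
                  lab = (\<lambda>\<rho>. lab K (last \<rho>)),
                  init = [init K] \<rparr>"

definition models_ct :: "('s, 'ap) kripke \<Rightarrow> 'ap hs \<Rightarrow> bool" where
  "models_ct K \<psi> \<longleftrightarrow> models_st (comp_tree K) \<psi>"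

end

(* The structures chain n s (states 0, ..., n + 2, a self-loop at 0, steps i -> i + 1, every
   proposition true exactly at the absorbing state n + 2) separate F p: from s = 1 every path
   reaches n + 2, from s = 0 a path may stay at 0 forever.  A trace of chain n s is the clamped
   image of an integer interval [a, e), and no HS formula of modal depth d distinguishes two
   intervals whose endpoints, together with the position n + 2 of the p-state, have the same
   pairwise distances capped at 3^d.  This is an Ehrenfeucht-Fraisse argument: each modality
   costs one round, and the cap shrinks by a factor 3 per round.  If 3^(d+1) <= n + 1, initial
   traces from 0 (starting at a position <= 0) and from 1 (starting at position 1) both start
   beyond the cap, so chain n 1 and chain n 0 satisfy the same formulas of depth d.  In the
   computation tree a trace is a window of an initial trace, and the position where the window
   starts is tracked as one more point. *)

theory Submission
  imports Defs
begin

section \<open>Capped distances between integer points\<close>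

definition cap :: "nat \<Rightarrow> int \<Rightarrow> int" where
  "cap N x = max (- int N) (min (int N) x)"

definition cap_equiv :: "nat \<Rightarrow> int list \<Rightarrow> int list \<Rightarrow> bool" where
  "cap_equiv N xs ys \<longleftrightarrow> length xs = length ys \<and>
     (\<forall>i<length xs. \<forall>j<length xs. cap N (xs ! j - xs ! i) = cap N (ys ! j - ys ! i))"

lemma cap_eq_pos_iff: "1 \<le> N \<Longrightarrow> cap N x = cap N y \<Longrightarrow> 0 < x \<longleftrightarrow> 0 < y"
  and cap_eq_nonneg_iff: "1 \<le> N \<Longrightarrow> cap N x = cap N y \<Longrightarrow> 0 \<le> x \<longleftrightarrow> 0 \<le> y"
  unfolding cap_def by (auto simp: max_def min_def split: if_splits)

lemma cap_eq_mono: "N \<le> M \<Longrightarrow> cap M x = cap M y \<Longrightarrow> cap N x = cap N y"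
  unfolding cap_def by (auto simp: max_def min_def split: if_splits)

lemma cap_uminus: "cap N (- x) = - cap N x"
  unfolding cap_def by (auto simp: max_def min_def)

lemma cap_eq_swap: "cap N (x - y) = cap N (x' - y') \<Longrightarrow> cap N (y - x) = cap N (y' - x')"
  by (metis cap_uminus minus_diff_eq)

lemma cap_eq_upper: "int N \<le> x \<Longrightarrow> cap N x = int N"
  and cap_eq_lower: "x \<le> - int N \<Longrightarrow> cap N x = - int N"
  by (simp_all add: cap_def)

lemma cap_eq_add_nonneg:
  "cap N x = cap N y \<Longrightarrow> 0 \<le> k \<Longrightarrow> 0 \<le> x \<Longrightarrow> 0 \<le> y \<Longrightarrow> cap N (k + x) = cap N (k + y)"
  unfolding cap_def by (auto simp: max_def min_def split: if_splits)

lemma cap_equiv_nth: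
  "cap_equiv N xs ys \<Longrightarrow> i < length xs \<Longrightarrow> j < length xs \<Longrightarrow>
   cap N (xs ! j - xs ! i) = cap N (ys ! j - ys ! i)"
  unfolding cap_equiv_def by blast

lemma cap_equivI:
  assumes "length xs = length ys"
    and "\<And>i j. i < j \<Longrightarrow> j < length xs \<Longrightarrow> cap N (xs ! j - xs ! i) = cap N (ys ! j - ys ! i)"
  shows "cap_equiv N xs ys"
  unfolding cap_equiv_def
proof (intro conjI allI impI)
  fix i j assume "i < length xs" "j < length xs"
  then consider "i < j" | "i = j" | "j < i" by linarith
  then show "cap N (xs ! j - xs ! i) = cap N (ys ! j - ys ! i)"
  proof cases
    case 3
    with assms(2) \<open>i < length xs\<close> show ?thesis by (blast intro: cap_eq_swap)
  qed (use assms \<open>j < length xs\<close> in auto)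
qed (fact assms)

lemma cap_equiv_Nil: "cap_equiv N [] ys \<longleftrightarrow> ys = []"
  by (auto simp: cap_equiv_def)

lemma cap_equiv_Cons:
  "cap_equiv N (x # xs) (y # ys) \<longleftrightarrow>
     list_all2 (\<lambda>x' y'. cap N (x' - x) = cap N (y' - y)) xs ys \<and> cap_equiv N xs ys"
proof
  assume eqv: "cap_equiv N (x # xs) (y # ys)"
  then have len: "length xs = length ys" by (simp add: cap_equiv_def)
  show "list_all2 (\<lambda>x' y'. cap N (x' - x) = cap N (y' - y)) xs ys \<and> cap_equiv N xs ys"
    using len cap_equiv_nth[OF eqv, of 0 "Suc i" for i]
      cap_equiv_nth[OF eqv, of "Suc i" "Suc j" for i j]
    by (simp add: list_all2_conv_all_nth cap_equiv_def)
next
  assume "list_all2 (\<lambda>x' y'. cap N (x' - x) = cap N (y' - y)) xs ys \<and> cap_equiv N xs ys"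
  then show "cap_equiv N (x # xs) (y # ys)"
    by (intro cap_equivI)
      (auto simp: list_all2_conv_all_nth cap_equiv_def nth_Cons split: nat.splits)
qed

lemmas cap_equiv_simps = cap_equiv_Cons cap_equiv_Nil

lemma cap_equiv_sym: "cap_equiv N xs ys \<Longrightarrow> cap_equiv N ys xs"
  and cap_equiv_trans: "cap_equiv N xs ys \<Longrightarrow> cap_equiv N ys zs \<Longrightarrow> cap_equiv N xs zs"
  unfolding cap_equiv_def by auto

lemma cap_equiv_mono: "N \<le> M \<Longrightarrow> cap_equiv M xs ys \<Longrightarrow> cap_equiv N xs ys"
  unfolding cap_equiv_def using cap_eq_mono by metis

lemma cap_equiv_select:
  "cap_equiv N xs ys \<Longrightarrow> \<forall>k\<in>set ks. k < length xs \<Longrightarrow>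
   cap_equiv N (map ((!) xs) ks) (map ((!) ys) ks)"
  unfolding cap_equiv_def by auto

lemma cap_equiv_shift_far_below:
  assumes "\<forall>x\<in>set xs. x - c \<le> - int M \<and> x + \<delta> - c \<le> - int M"
  shows "cap_equiv M (c # map (\<lambda>x. x + \<delta>) xs) (c # xs)"
proof (rule cap_equivI)
  fix i j assume "i < j" "j < length (c # map (\<lambda>x. x + \<delta>) xs)"
  with assms show "cap M ((c # map (\<lambda>x. x + \<delta>) xs) ! j - (c # map (\<lambda>x. x + \<delta>) xs) ! i) =
    cap M ((c # xs) ! j - (c # xs) ! i)"
    by (cases i; cases j) (auto simp: cap_eq_lower)
qed simp

text \<open>The one-point extension step of the Ehrenfeucht-Fraisse game on the integers: a new
  point closer than \<open>N\<close> to an old point is copied with the same offset; otherwise it lies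
  in a gap of width at least \<open>2N\<close>, and its partner is put at distance \<open>N\<close> from the partner
  of the gap's lower end (or below everything).\<close>

lemma cap_extend_near:
  assumes S: "\<forall>(x, x')\<in>S. \<forall>(z, z')\<in>S. cap (2 * N + 1) (z - x) = cap (2 * N + 1) (z' - x')"
    and "(x0, x0') \<in> S" "\<bar>y - x0\<bar> < int N"
  shows "\<forall>(x, x')\<in>S. cap N (y - x) = cap N (x0' + (y - x0) - x')"
proof clarify
  fix x x' assume "(x, x') \<in> S"
  with S \<open>(x0, x0') \<in> S\<close> have "cap (2 * N + 1) (x0 - x) = cap (2 * N + 1) (x0' - x')" by blast
  with \<open>\<bar>y - x0\<bar> < int N\<close> show "cap N (y - x) = cap N (x0' + (y - x0) - x')"
    unfolding cap_def by (auto simp: max_def min_def split: if_splits)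
qed

lemma cap_extend_above:
  assumes S: "\<forall>(x, x')\<in>S. \<forall>(z, z')\<in>S. cap (2 * N + 1) (z - x) = cap (2 * N + 1) (z' - x')"
    and "1 \<le> N" "(m, m') \<in> S" "m < y"
    and far: "\<forall>(x, x')\<in>S. int N \<le> \<bar>y - x\<bar>" and below_m: "\<forall>(x, x')\<in>S. x < y \<longrightarrow> x \<le> m"
  shows "\<forall>(x, x')\<in>S. cap N (y - x) = cap N (m' + int N - x')"
proof clarify
  fix x x' assume x: "(x, x') \<in> S"
  with S \<open>(m, m') \<in> S\<close> have eq: "cap (2 * N + 1) (m - x) = cap (2 * N + 1) (m' - x')" by blast
  have "int N \<le> y - m" using far \<open>(m, m') \<in> S\<close> \<open>m < y\<close> by force
  show "cap N (y - x) = cap N (m' + int N - x')"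
  proof (cases "x < y")
    case True
    with below_m x have "x \<le> m" by blast
    then have "x' \<le> m'" using cap_eq_nonneg_iff[OF _ eq] by simp
    with \<open>x \<le> m\<close> \<open>int N \<le> y - m\<close> show ?thesis by (simp add: cap_eq_upper)
  next
    case False
    with far x have "y + int N \<le> x" by force
    with \<open>int N \<le> y - m\<close> have "m - x \<le> - 2 * int N" by simp
    with eq have "m' - x' \<le> - 2 * int N"
      unfolding cap_def by (auto simp: max_def min_def split: if_splits)
    with \<open>y + int N \<le> x\<close> show ?thesis by (simp add: cap_eq_lower)
  qed
qed

lemma cap_extend_below:
  assumes S: "\<forall>(x, x')\<in>S. \<forall>(z, z')\<in>S. cap (2 * N + 1) (z - x) = cap (2 * N + 1) (z' - x')"
    and "1 \<le> N" "(m, m') \<in> S" and above: "\<forall>(x, x')\<in>S. m \<le> x \<and> y + int N \<le> x"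
  shows "\<forall>(x, x')\<in>S. cap N (y - x) = cap N (m' - int N - x')"
proof clarify
  fix x x' assume x: "(x, x') \<in> S"
  with S \<open>(m, m') \<in> S\<close> have "cap (2 * N + 1) (x - m) = cap (2 * N + 1) (x' - m')" by blast
  with above x have "m' \<le> x'" using cap_eq_nonneg_iff by fastforce
  with above x show "cap N (y - x) = cap N (m' - int N - x')" by (force simp: cap_eq_lower)
qed

lemma cap_extend_pairs:
  fixes S :: "(int \<times> int) set"
  assumes "finite S" "S \<noteq> {}" "1 \<le> N"
    and S: "\<forall>(x, x')\<in>S. \<forall>(z, z')\<in>S. cap (2 * N + 1) (z - x) = cap (2 * N + 1) (z' - x')"
  shows "\<exists>y'. \<forall>(x, x')\<in>S. cap N (y - x) = cap N (y' - x')"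
proof (cases "\<exists>(x0, x0')\<in>S. \<bar>y - x0\<bar> < int N")
  case True
  then show ?thesis using cap_extend_near[OF S] by blast
next
  case False
  then have far: "\<forall>(x, x')\<in>S. int N \<le> \<bar>y - x\<bar>" by auto
  show ?thesis
  proof (cases "\<exists>(x, x')\<in>S. x < y")
    case True
    define B where "B = fst ` {q \<in> S. fst q < y}"
    have "finite B" "B \<noteq> {}" using \<open>finite S\<close> True by (force simp: B_def)+
    then have "Max B \<in> B" by simp
    then obtain m m' where "(m, m') \<in> S" "m < y" "m = Max B" by (force simp: B_def)
    moreover have "\<forall>(x, x')\<in>S. x < y \<longrightarrow> x \<le> m"
      using \<open>finite B\<close> \<open>m = Max B\<close> by (force simp: B_def intro: Max_ge)
    ultimately show ?thesis using cap_extend_above[OF S \<open>1 \<le> N\<close> _ _ far] by blast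
  next
    case False
    have "Min (fst ` S) \<in> fst ` S" using \<open>finite S\<close> \<open>S \<noteq> {}\<close> by simp
    then obtain m m' where "(m, m') \<in> S" "m = Min (fst ` S)" by force
    moreover have "\<forall>(x, x')\<in>S. m \<le> x \<and> y + int N \<le> x"
      using \<open>finite S\<close> \<open>m = Min (fst ` S)\<close> False far by (force intro: Min_le)
    ultimately show ?thesis using cap_extend_below[OF S \<open>1 \<le> N\<close>] by blast
  qed
qed

lemma cap_equiv_extend:
  assumes "cap_equiv M xs ys" "xs \<noteq> []" "1 \<le> N" "2 * N + 1 \<le> M"
  shows "\<exists>y'. cap_equiv N (xs @ [y]) (ys @ [y'])"
proof -
  let ?S = "set (zip xs ys)"
  have len: "length xs = length ys" using assms(1) by (simp add: cap_equiv_def)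
  have "\<forall>(x, x')\<in>?S. \<forall>(z, z')\<in>?S. cap (2 * N + 1) (z - x) = cap (2 * N + 1) (z' - x')"
  proof clarify
    fix x x' z z' assume "(x, x') \<in> ?S" "(z, z') \<in> ?S"
    then obtain i j where "i < length xs" "j < length xs"
      "x = xs ! i" "x' = ys ! i" "z = xs ! j" "z' = ys ! j"
      using len by (auto simp: in_set_zip)
    then show "cap (2 * N + 1) (z - x) = cap (2 * N + 1) (z' - x')"
      using cap_equiv_nth[OF cap_equiv_mono[OF assms(4,1)]] by blast
  qed
  moreover have "?S \<noteq> {}" using assms(2) len by (cases xs; cases ys) auto
  ultimately obtain y' where y': "\<forall>(x, x')\<in>?S. cap N (y - x) = cap N (y' - x')"
    using cap_extend_pairs[OF _ _ assms(3)] by blast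
  have new: "cap N (y - xs ! i) = cap N (y' - ys ! i)" if "i < length xs" for i
  proof -
    from that len have "(xs ! i, ys ! i) \<in> ?S" by (auto simp: in_set_zip)
    with y' show ?thesis by blast
  qed
  have old: "cap_equiv N xs ys" using assms(4) by (intro cap_equiv_mono[OF _ assms(1)]) simp
  have "cap_equiv N (xs @ [y]) (ys @ [y'])"
  proof (rule cap_equivI)
    fix i j assume "i < j" "j < length (xs @ [y])"
    then consider "j < length xs" | "j = length xs" "i < length xs" by fastforce
    then show "cap N ((xs @ [y]) ! j - (xs @ [y]) ! i) = cap N ((ys @ [y']) ! j - (ys @ [y']) ! i)"
    proof cases
      case 1
      with \<open>i < j\<close> show ?thesis using cap_equiv_nth[OF old, of i j] len by (simp add: nth_append)
    next
      case 2
      with new show ?thesis using len by (simp add: nth_append)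
    qed
  qed (simp add: len)
  then show ?thesis ..
qed

lemma cap_equiv_extend_pow3:
  "cap_equiv (3 ^ Suc d) xs ys \<Longrightarrow> xs \<noteq> [] \<Longrightarrow> \<exists>y'. cap_equiv (3 ^ d) (xs @ [y]) (ys @ [y'])"
  by (rule cap_equiv_extend) auto

lemma cap_equiv_less_iff:
  "cap_equiv N xs ys \<Longrightarrow> 0 < N \<Longrightarrow> i < length xs \<Longrightarrow> j < length xs \<Longrightarrow>
   xs ! i < xs ! j \<longleftrightarrow> ys ! i < ys ! j"
  and cap_equiv_le_iff:
  "cap_equiv N xs ys \<Longrightarrow> 0 < N \<Longrightarrow> i < length xs \<Longrightarrow> j < length xs \<Longrightarrow>
   xs ! i \<le> xs ! j \<longleftrightarrow> ys ! i \<le> ys ! j"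
  using cap_eq_pos_iff[of N "xs ! j - xs ! i" "ys ! j - ys ! i"]
    cap_eq_nonneg_iff[of N "xs ! j - xs ! i" "ys ! j - ys ! i"] cap_equiv_nth[of N xs ys i j]
  by simp_all

section \<open>Back-and-forth systems for HS\<close>

fun hs_depth :: "'ap hs \<Rightarrow> nat" where
  "hs_depth (Prop q) = 0"
| "hs_depth (Neg \<psi>) = hs_depth \<psi>"
| "hs_depth (Conj \<psi> \<phi>) = max (hs_depth \<psi>) (hs_depth \<phi>)"
| "hs_depth (DiaB \<psi>) = Suc (hs_depth \<psi>)"
| "hs_depth (DiaE \<psi>) = Suc (hs_depth \<psi>)"
| "hs_depth (DiaBbar \<psi>) = Suc (hs_depth \<psi>)"
| "hs_depth (DiaEbar \<psi>) = Suc (hs_depth \<psi>)"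

text \<open>The forth conditions of an Ehrenfeucht-Fraisse game for HS, in which \<open>Z d\<close> relates
  traces from which the second player survives \<open>d\<close> more rounds.\<close>

locale hs_forth =
  fixes K :: "('s, 'ap) kripke" and K' :: "('t, 'ap) kripke"
    and Z :: "nat \<Rightarrow> 's list \<Rightarrow> 't list \<Rightarrow> bool"
  assumes Prop_eq: "Z d \<rho> \<sigma> \<Longrightarrow> hs_sat K \<rho> (Prop q) \<longleftrightarrow> hs_sat K' \<sigma> (Prop q)"
    and Pref_forth: "Z (Suc d) \<rho> \<sigma> \<Longrightarrow> \<rho>' \<in> Pref \<rho> \<Longrightarrow> \<exists>\<sigma>' \<in> Pref \<sigma>. Z d \<rho>' \<sigma>'"
    and Suff_forth: "Z (Suc d) \<rho> \<sigma> \<Longrightarrow> \<rho>' \<in> Suff \<rho> \<Longrightarrow> \<exists>\<sigma>' \<in> Suff \<sigma>. Z d \<rho>' \<sigma>'"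
    and Bbar_forth: "Z (Suc d) \<rho> \<sigma> \<Longrightarrow> is_trace K \<rho>' \<Longrightarrow> \<rho> \<in> Pref \<rho>' \<Longrightarrow>
      \<exists>\<sigma>'. is_trace K' \<sigma>' \<and> \<sigma> \<in> Pref \<sigma>' \<and> Z d \<rho>' \<sigma>'"
    and Ebar_forth: "Z (Suc d) \<rho> \<sigma> \<Longrightarrow> is_trace K \<rho>' \<Longrightarrow> \<rho> \<in> Suff \<rho>' \<Longrightarrow>
      \<exists>\<sigma>'. is_trace K' \<sigma>' \<and> \<sigma> \<in> Suff \<sigma>' \<and> Z d \<rho>' \<sigma>'"

lemma hs_sat_eq_if_back_and_forth:
  assumes zig: "hs_forth K K' Z" and zag: "hs_forth K' K (\<lambda>d. (Z d)\<inverse>\<inverse>)"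
  shows "Z d \<rho> \<sigma> \<Longrightarrow> hs_depth \<psi> \<le> d \<Longrightarrow> hs_sat K \<rho> \<psi> \<longleftrightarrow> hs_sat K' \<sigma> \<psi>"
proof (induction \<psi> arbitrary: d \<rho> \<sigma>)
  case (Prop q)
  from Prop.prems(1) show ?case by (rule hs_forth.Prop_eq[OF zig])
next
  case (DiaB \<psi>)
  then obtain d' where d': "d = Suc d'" "hs_depth \<psi> \<le> d'" by (cases d) auto
  show ?case
    using hs_forth.Pref_forth[OF zig, of d' \<rho> \<sigma>] hs_forth.Pref_forth[OF zag, of d' \<sigma> \<rho>] DiaB d'
    by auto blast+
next
  case (DiaE \<psi>)
  then obtain d' where d': "d = Suc d'" "hs_depth \<psi> \<le> d'" by (cases d) auto
  show ?case
    using hs_forth.Suff_forth[OF zig, of d' \<rho> \<sigma>] hs_forth.Suff_forth[OF zag, of d' \<sigma> \<rho>] DiaE d'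
    by auto blast+
next
  case (DiaBbar \<psi>)
  then obtain d' where d': "d = Suc d'" "hs_depth \<psi> \<le> d'" by (cases d) auto
  show ?case
    using hs_forth.Bbar_forth[OF zig, of d' \<rho> \<sigma>] hs_forth.Bbar_forth[OF zag, of d' \<sigma> \<rho>] DiaBbar d'
    by auto blast+
next
  case (DiaEbar \<psi>)
  then obtain d' where d': "d = Suc d'" "hs_depth \<psi> \<le> d'" by (cases d) auto
  show ?case
    using hs_forth.Ebar_forth[OF zig, of d' \<rho> \<sigma>] hs_forth.Ebar_forth[OF zag, of d' \<sigma> \<rho>] DiaEbar d'
    by auto blast+
qed simp_all

lemma successively_iff_nth:
  "successively P xs \<longleftrightarrow> (\<forall>i. Suc i < length xs \<longrightarrow> P (xs ! i) (xs ! Suc i))"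
proof (induction P xs rule: successively.induct)
  case (3 P x y xs)
  then show ?case by
    (auto simp: All_less_Suc2[where n = "Suc (length xs)", simplified] less_Suc_eq_0_disj)
qed auto

lemma is_trace_iff_successively:
  "is_trace K \<rho> \<longleftrightarrow> \<rho> \<noteq> [] \<and> set \<rho> \<subseteq> states K \<and> successively (\<lambda>s t. (s, t) \<in> trans K) \<rho>"
  by (simp add: is_trace_def successively_iff_nth)

lemma is_trace_singleton: "is_trace K [x] \<longleftrightarrow> x \<in> states K"
  by (simp add: is_trace_def)

lemma is_trace_snoc:
  "\<rho> \<noteq> [] \<Longrightarrow> is_trace K (\<rho> @ [x]) \<longleftrightarrow> is_trace K \<rho> \<and> x \<in> states K \<and> (last \<rho>, x) \<in> trans K"
  by (auto simp: is_trace_iff_successively successively_append_iff)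

lemma initial_trace_take: "initial_trace K \<rho> \<Longrightarrow> 0 < k \<Longrightarrow> initial_trace K (take k \<rho>)"
  unfolding initial_trace_def is_trace_def by (auto simp: hd_take dest: in_set_takeD)

lemma comp_tree_simps [simp]:
  "states (comp_tree K) = {\<rho>. initial_trace K \<rho>}"
  "trans (comp_tree K) = {(\<rho>, \<rho> @ [s]) | \<rho> s. initial_trace K \<rho> \<and> initial_trace K (\<rho> @ [s])}"
  "lab (comp_tree K) = (\<lambda>\<rho>. lab K (last \<rho>))"
  "init (comp_tree K) = [init K]"
  by (simp_all add: comp_tree_def)

definition prefixes_from :: "'s list \<Rightarrow> nat \<Rightarrow> 's list list" where
  "prefixes_from \<rho> i = map (\<lambda>j. take (Suc j) \<rho>) [i..<length \<rho>]"

lemma length_prefixes_from [simp]: "length (prefixes_from \<rho> i) = length \<rho> - i"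
  and nth_prefixes_from [simp]: "k < length \<rho> - i \<Longrightarrow> prefixes_from \<rho> i ! k = take (Suc (i + k)) \<rho>"
  by (simp_all add: prefixes_from_def)

lemma prefixes_from_Cons: "i < length \<rho> \<Longrightarrow>
  prefixes_from \<rho> i = take (Suc i) \<rho> # prefixes_from \<rho> (Suc i)"
  by (simp add: prefixes_from_def upt_conv_Cons)

lemma prefixes_from_snoc:
  "i \<le> length \<rho> \<Longrightarrow> prefixes_from (\<rho> @ [s]) i = prefixes_from \<rho> i @ [\<rho> @ [s]]"
  by (simp add: prefixes_from_def)

lemma take_prefixes_from: "i + k \<le> length \<rho> \<Longrightarrow>
  take k (prefixes_from \<rho> i) = prefixes_from (take (i + k) \<rho>) i"
  by (rule nth_equalityI) (auto simp: min_def split: if_splits)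

lemma drop_prefixes_from: "drop k (prefixes_from \<rho> i) = prefixes_from \<rho> (i + k)"
  by (rule nth_equalityI) (auto simp: algebra_simps)

lemma last_prefixes_from: "i < length \<rho> \<Longrightarrow> last (prefixes_from \<rho> i) = \<rho>"
  by (cases \<rho> rule: rev_cases) (simp_all add: prefixes_from_snoc)

lemma hd_prefixes_from: "i < length \<rho> \<Longrightarrow> hd (prefixes_from \<rho> i) = take (Suc i) \<rho>"
  by (simp add: prefixes_from_Cons)

lemma prefixes_from_inject:
  assumes "i < length \<rho>" "i' < length \<rho>'" "prefixes_from \<rho> i = prefixes_from \<rho>' i'"
  shows "\<rho> = \<rho>' \<and> i = i'"
proof -
  have "\<rho> = \<rho>'" using assms last_prefixes_from by metis
  moreover have "take (Suc i) \<rho> = take (Suc i') \<rho>'" using assms hd_prefixes_from by metis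
  then have "i = i'" using assms \<open>\<rho> = \<rho>'\<close> by (metis Suc_inject Suc_leI length_take min.absorb2)
  ultimately show ?thesis ..
qed

lemma is_trace_comp_tree_iff:
  "is_trace (comp_tree K) \<tau> \<longleftrightarrow> (\<exists>\<rho> i. initial_trace K \<rho> \<and> i < length \<rho> \<and> \<tau> = prefixes_from \<rho> i)"
proof
  assume tr: "is_trace (comp_tree K) \<tau>"
  then have "\<tau> \<noteq> []" by (simp add: is_trace_def)
  then show "\<exists>\<rho> i. initial_trace K \<rho> \<and> i < length \<rho> \<and> \<tau> = prefixes_from \<rho> i"
    using tr
  proof (induction \<tau> rule: rev_nonempty_induct)
    case (single \<rho>)
    then have "initial_trace K \<rho>" "\<rho> \<noteq> []"
      by (simp_all add: is_trace_singleton initial_trace_def is_trace_def)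
    moreover have "prefixes_from \<rho> (length \<rho> - 1) = [\<rho>]"
      using \<open>\<rho> \<noteq> []\<close> by (cases \<rho> rule: rev_cases)
        (simp_all add: prefixes_from_snoc prefixes_from_def)
    ultimately show ?case by (intro exI[of _ \<rho>] exI[of _ "length \<rho> - 1"]) simp
  next
    case (snoc x \<tau>)
    then obtain \<rho> i where "initial_trace K \<rho>" "i < length \<rho>" and \<tau>: "\<tau> = prefixes_from \<rho> i"
      by (auto simp: is_trace_snoc)
    with snoc have "(\<rho>, x) \<in> trans (comp_tree K)" by (simp add: is_trace_snoc last_prefixes_from)
    then obtain s where "x = \<rho> @ [s]" "initial_trace K (\<rho> @ [s])" by auto
    with \<open>i < length \<rho>\<close> show ?case
      by (intro exI[of _ "\<rho> @ [s]"] exI[of _ i]) (simp add: \<tau> prefixes_from_snoc)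
  qed
next
  assume "\<exists>\<rho> i. initial_trace K \<rho> \<and> i < length \<rho> \<and> \<tau> = prefixes_from \<rho> i"
  then obtain \<rho> i where \<rho>: "initial_trace K \<rho>" "i < length \<rho>"
    and \<tau>: "\<tau> = prefixes_from \<rho> i" by blast
  have "(take (Suc j) \<rho>, take (Suc (Suc j)) \<rho>) \<in> trans (comp_tree K)" if "Suc j < length \<rho>" for j
  proof -
    have "take (Suc (Suc j)) \<rho> = take (Suc j) \<rho> @ [\<rho> ! Suc j]"
      using that by (simp add: take_Suc_conv_app_nth)
    then show ?thesis
      using initial_trace_take[OF \<rho>(1), of "Suc j"] initial_trace_take[OF \<rho>(1), of "Suc (Suc j)"]
      by simp
  qed
  then show "is_trace (comp_tree K) \<tau>"
    unfolding is_trace_def \<tau> using \<rho> initial_trace_take[OF \<rho>(1)]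
    by (auto simp: prefixes_from_def)
qed

lemma initial_trace_comp_tree_iff:
  "initial_trace (comp_tree K) \<tau> \<longleftrightarrow> (\<exists>\<rho>. initial_trace K \<rho> \<and> \<tau> = prefixes_from \<rho> 0)"
proof
  assume "initial_trace (comp_tree K) \<tau>"
  then obtain \<rho> i where \<rho>: "initial_trace K \<rho>" "i < length \<rho>" "\<tau> = prefixes_from \<rho> i"
    and "hd \<tau> = [init K]" by (auto simp: initial_trace_def is_trace_comp_tree_iff)
  then have "take (Suc i) \<rho> = [init K]" by (simp add: hd_prefixes_from)
  from arg_cong[OF this, of length] \<rho>(2) have "i = 0" by simp
  with \<rho> show "\<exists>\<rho>. initial_trace K \<rho> \<and> \<tau> = prefixes_from \<rho> 0" by blast
next
  assume "\<exists>\<rho>. initial_trace K \<rho> \<and> \<tau> = prefixes_from \<rho> 0"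
  then obtain \<rho> where \<rho>: "initial_trace K \<rho>" and \<tau>: "\<tau> = prefixes_from \<rho> 0" by blast
  then have "\<rho> \<noteq> []" "hd \<rho> = init K" by (simp_all add: initial_trace_def is_trace_def)
  then have "hd \<tau> = [init K]" by (simp add: \<tau> hd_prefixes_from take_Suc)
  moreover have "is_trace (comp_tree K) \<tau>"
    unfolding is_trace_comp_tree_iff using \<rho> \<tau> \<open>\<rho> \<noteq> []\<close> by blast
  ultimately show "initial_trace (comp_tree K) \<tau>" by (simp add: initial_trace_def)
qed

lemma Pref_prefixes_from:
  "\<tau> \<in> Pref (prefixes_from \<rho> i) \<longleftrightarrow> (\<exists>j. i < j \<and> j < length \<rho> \<and> \<tau> = prefixes_from (take j \<rho>) i)"
proof
  assume "\<tau> \<in> Pref (prefixes_from \<rho> i)"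
  then obtain k where "1 \<le> k" "k < length \<rho> - i" "\<tau> = take k (prefixes_from \<rho> i)"
    by (auto simp: Pref_def)
  then show "\<exists>j. i < j \<and> j < length \<rho> \<and> \<tau> = prefixes_from (take j \<rho>) i"
    by (intro exI[of _ "i + k"]) (simp add: take_prefixes_from)
next
  assume "\<exists>j. i < j \<and> j < length \<rho> \<and> \<tau> = prefixes_from (take j \<rho>) i"
  then obtain j where "i < j" "j < length \<rho>" "\<tau> = take (j - i) (prefixes_from \<rho> i)"
    by (auto simp: take_prefixes_from)
  then show "\<tau> \<in> Pref (prefixes_from \<rho> i)"
    unfolding Pref_def by (intro CollectI exI[of _ "j - i"]) auto
qed

lemma Suff_prefixes_from:
  "\<tau> \<in> Suff (prefixes_from \<rho> i) \<longleftrightarrow> (\<exists>j. i < j \<and> j < length \<rho> \<and> \<tau> = prefixes_from \<rho> j)"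
proof
  assume "\<tau> \<in> Suff (prefixes_from \<rho> i)"
  then obtain k where "1 \<le> k" "k < length \<rho> - i" "\<tau> = drop k (prefixes_from \<rho> i)"
    by (auto simp: Suff_def)
  then show "\<exists>j. i < j \<and> j < length \<rho> \<and> \<tau> = prefixes_from \<rho> j"
    by (intro exI[of _ "i + k"]) (simp add: drop_prefixes_from)
next
  assume "\<exists>j. i < j \<and> j < length \<rho> \<and> \<tau> = prefixes_from \<rho> j"
  then obtain j where "i < j" "j < length \<rho>" "\<tau> = drop (j - i) (prefixes_from \<rho> i)"
    by (auto simp: drop_prefixes_from)
  then show "\<tau> \<in> Suff (prefixes_from \<rho> i)"
    unfolding Suff_def by (intro CollectI exI[of _ "j - i"]) auto
qed

lemma map_last_prefixes_from: "map last (prefixes_from \<rho> i) = drop i \<rho>"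
  by (rule nth_equalityI) (simp_all add: take_Suc_conv_app_nth)

lemma hs_sat_Prop_comp_tree:
  "hs_sat (comp_tree K) (prefixes_from \<rho> i) (Prop q) \<longleftrightarrow> hs_sat K (drop i \<rho>) (Prop q)"
proof -
  have "set (drop i \<rho>) = last ` set (prefixes_from \<rho> i)"
    by (simp flip: map_last_prefixes_from)
  then show ?thesis by simp
qed

lemma comp_tree_Pref_extension:
  assumes "is_trace (comp_tree K) \<tau>" "i < length \<rho>" "prefixes_from \<rho> i \<in> Pref \<tau>"
  shows "\<exists>\<rho>'. initial_trace K \<rho>' \<and> \<rho> \<in> Pref \<rho>' \<and> \<tau> = prefixes_from \<rho>' i"
proof -
  obtain \<rho>' i' where "initial_trace K \<rho>'" "i' < length \<rho>'" and \<tau>: "\<tau> = prefixes_from \<rho>' i'"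
    using assms(1) by (auto simp: is_trace_comp_tree_iff)
  moreover obtain j where "i' < j" "j < length \<rho>'"
    "prefixes_from \<rho> i = prefixes_from (take j \<rho>') i'"
    using assms(3) by (auto simp: \<tau> Pref_prefixes_from)
  moreover from this have "\<rho> = take j \<rho>' \<and> i = i'"
    using assms(2) by (intro prefixes_from_inject) simp_all
  ultimately have "\<rho> \<in> Pref \<rho>'" "\<tau> = prefixes_from \<rho>' i"
    unfolding Pref_def by auto
  with \<open>initial_trace K \<rho>'\<close> show ?thesis by blast
qed

lemma comp_tree_Suff_extension:
  assumes "is_trace (comp_tree K) \<tau>" "i < length \<rho>" "prefixes_from \<rho> i \<in> Suff \<tau>"
  shows "\<exists>j < i. \<tau> = prefixes_from \<rho> j"
proof -
  obtain \<rho>' i' where "i' < length \<rho>'" and \<tau>: "\<tau> = prefixes_from \<rho>' i'"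
    using assms(1) by (auto simp: is_trace_comp_tree_iff)
  moreover obtain j where "i' < j" "j < length \<rho>'" "prefixes_from \<rho> i = prefixes_from \<rho>' j"
    using assms(3) by (auto simp: \<tau> Suff_prefixes_from)
  moreover from this have "\<rho> = \<rho>' \<and> i = j"
    using assms(2) by (intro prefixes_from_inject) simp_all
  ultimately show ?thesis by auto
qed

section \<open>The chain structures\<close>

definition chain_trans :: "nat \<Rightarrow> (nat \<times> nat) set" where
  "chain_trans n = {(x, y). x \<le> n + 2 \<and> (y = min (x + 1) (n + 2) \<or> x = 0 \<and> y = 0)}"

definition chain :: "nat \<Rightarrow> nat \<Rightarrow> (nat, 'ap) kripke" where
  "chain n s = \<lparr>states = {0..n + 2}, trans = chain_trans n,
                lab = (\<lambda>x. if x = n + 2 then UNIV else {}), init = s\<rparr>"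

lemma chain_simps [simp]:
  "states (chain n s) = {0..n + 2}" "trans (chain n s) = chain_trans n"
  "lab (chain n s) = (\<lambda>x. if x = n + 2 then UNIV else {})" "init (chain n s) = s"
  by (simp_all add: chain_def)

lemma finite_kripke_chain: "s \<le> n + 2 \<Longrightarrow> finite_kripke (chain n s)"
  unfolding finite_kripke_def kripke_def by (auto simp: chain_trans_def)

lemma models_F_chain_1: "models_F (chain n 1) p"
  unfolding models_F_def
proof (intro allI impI)
  fix \<pi> assume \<pi>: "initial_path (chain n 1) \<pi>"
  have "\<pi> k = min (k + 1) (n + 2)" for k
  proof (induction k)
    case (Suc k)
    have "(\<pi> k, \<pi> (Suc k)) \<in> chain_trans n" using \<pi> by (simp add: initial_path_def)
    with Suc show ?case by (auto simp: chain_trans_def)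
  qed (use \<pi> in \<open>simp add: initial_path_def\<close>)
  then have "\<pi> (n + 1) = n + 2" by simp
  then show "\<exists>i. p \<in> lab (chain n 1) (\<pi> i)" by auto
qed

lemma not_models_F_chain_0: "\<not> models_F (chain n 0) p"
  unfolding models_F_def initial_path_def
  by (auto intro!: exI[of _ "\<lambda>_. 0"] simp: chain_trans_def)

definition chain_state :: "nat \<Rightarrow> int \<Rightarrow> nat" where
  "chain_state n x = nat (min (max x 0) (int n + 2))"

text \<open>A trace is encoded by the integer interval \<open>[a, e)\<close> of positions it visits; positions
  below 0 and above \<open>n + 2\<close> account for the self-loops, so the encoding is not unique.\<close>

definition chain_trace :: "nat \<Rightarrow> int \<Rightarrow> int \<Rightarrow> nat list" where
  "chain_trace n a e = map (\<lambda>k. chain_state n (a + int k)) [0..<nat (e - a)]"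

definition top_pos :: "nat \<Rightarrow> int" where
  "top_pos n = int n + 2"

lemma chain_state_top: "top_pos n \<le> x \<Longrightarrow> chain_state n x = n + 2"
  and chain_state_top_iff: "chain_state n x = n + 2 \<longleftrightarrow> top_pos n \<le> x"
  and chain_state_zero_iff: "chain_state n x = 0 \<longleftrightarrow> x \<le> 0"
  and chain_state_le_1_iff: "chain_state n x \<le> 1 \<longleftrightarrow> x \<le> 1"
  by (auto simp: chain_state_def top_pos_def)

lemma chain_state_succ: "(chain_state n x, chain_state n (x + 1)) \<in> chain_trans n"
  by (auto simp: chain_state_def chain_trans_def)

lemma chain_state_succ_eq: "0 \<le> x \<Longrightarrow> chain_state n (x + 1) = min (chain_state n x + 1) (n + 2)"
  unfolding chain_state_def by (auto simp: min_def max_def)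

lemma length_chain_trace [simp]: "length (chain_trace n a e) = nat (e - a)"
  and nth_chain_trace [simp]: "k < nat (e - a) \<Longrightarrow> chain_trace n a e ! k = chain_state n (a + int k)"
  by (simp_all add: chain_trace_def)

lemma set_chain_trace: "set (chain_trace n a e) = chain_state n ` {a..<e}"
proof -
  have "{a..<e} = (\<lambda>k. a + int k) ` {0..<nat (e - a)}"
  proof (intro set_eqI iffI)
    fix x assume "x \<in> {a..<e}"
    then have "x = a + int (nat (x - a))" "nat (x - a) \<in> {0..<nat (e - a)}" by auto
    then show "x \<in> (\<lambda>k. a + int k) ` {0..<nat (e - a)}" by blast
  qed auto
  then show ?thesis by (simp add: chain_trace_def image_image)
qed

lemma chain_trace_Cons: "a < e \<Longrightarrow> chain_trace n a e = chain_state n a # chain_trace n (a + 1) e"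
  by (rule nth_equalityI) (auto simp: nth_Cons algebra_simps split: nat.splits)

lemma chain_trace_snoc: "a \<le> e \<Longrightarrow> chain_trace n a (e + 1) = chain_trace n a e @ [chain_state n e]"
  by (rule nth_equalityI) (auto simp: nth_append intro!: arg_cong[where f = "chain_state n"])

lemma hd_chain_trace: "a < e \<Longrightarrow> hd (chain_trace n a e) = chain_state n a"
  by (simp add: chain_trace_Cons)

lemma last_chain_trace: "a < e \<Longrightarrow> last (chain_trace n a e) = chain_state n (e - 1)"
  using chain_trace_snoc[of a "e - 1" n] by simp

lemma take_chain_trace: "a \<le> y \<Longrightarrow> y \<le> e \<Longrightarrow> take (nat (y - a)) (chain_trace n a e) = chain_trace n a y"
  by (rule nth_equalityI) auto

lemma drop_chain_trace: "a \<le> y \<Longrightarrow> y \<le> e \<Longrightarrow> drop (nat (y - a)) (chain_trace n a e) = chain_trace n y e"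
  by (rule nth_equalityI) (auto simp: algebra_simps)

lemma chain_trace_at_top:
  "top_pos n \<le> a \<Longrightarrow> top_pos n \<le> b \<Longrightarrow> chain_trace n a (a + L) = chain_trace n b (b + L)"
  by (rule nth_equalityI) (auto simp: chain_state_top)

lemma chain_trace_at_bottom:
  "a + L \<le> 1 \<Longrightarrow> b + L \<le> 1 \<Longrightarrow> chain_trace n a (a + L) = chain_trace n b (b + L)"
  by (rule nth_equalityI) (auto simp: chain_state_def)

lemma chain_trace_eq_imp_same_length:
  "chain_trace n a e = chain_trace n b f \<Longrightarrow> a < e \<Longrightarrow> b < f \<Longrightarrow> f = b + (e - a)"
  by (drule arg_cong[of _ _ length]) simp

lemma is_trace_chain_trace: "a < e \<Longrightarrow> is_trace (chain n s) (chain_trace n a e)"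
  unfolding is_trace_def
  using chain_state_succ[of n "a + int i" for i]
  by (auto simp: chain_trace_def chain_state_def algebra_simps)

lemma chain_trace_snoc_step:
  assumes "a < e" "1 \<le> e" "(chain_state n (e - 1), x) \<in> chain_trans n"
  shows "\<exists>a' e'. a' < e' \<and> 1 \<le> e' \<and> chain_trace n a e @ [x] = chain_trace n a' e'"
proof -
  have "chain_state n e = min (chain_state n (e - 1) + 1) (n + 2)"
    using chain_state_succ_eq[of "e - 1" n] \<open>1 \<le> e\<close> by simp
  with assms(2,3) have "x = chain_state n e \<or> e = 1 \<and> x = 0"
    by (auto simp: chain_trans_def chain_state_zero_iff)
  then consider "x = chain_state n e" | "e = 1" "x = 0" by blast
  then show ?thesis
  proof cases
    case 1
    then have "chain_trace n a e @ [x] = chain_trace n a (e + 1)"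
      using chain_trace_snoc[of a e n] \<open>a < e\<close> by simp
    with \<open>a < e\<close> \<open>1 \<le> e\<close> show ?thesis by (intro exI[of _ a] exI[of _ "e + 1"]) simp
  next
    case 2
    \<comment> \<open>a step along the self-loop at 0: shift the interval one position to the left\<close>
    have "chain_trace n a e @ [x] = chain_trace n (a - 1) 0 @ [chain_state n 0]"
      using chain_trace_at_bottom[of "a - 1" "1 - a" a n] \<open>a < e\<close> 2 by (simp add: chain_state_def)
    also have "\<dots> = chain_trace n (a - 1) 1"
      using chain_trace_snoc[of "a - 1" 0 n] \<open>a < e\<close> 2 by simp
    finally show ?thesis using \<open>a < e\<close> 2 by (intro exI[of _ "a - 1"] exI[of _ 1]) auto
  qed
qed

lemma is_trace_chain_iff: "is_trace (chain n s) \<rho> \<longleftrightarrow> (\<exists>a e. a < e \<and> \<rho> = chain_trace n a e)"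
proof
  assume tr: "is_trace (chain n s) \<rho>"
  then have "\<rho> \<noteq> []" by (simp add: is_trace_def)
  then have "\<exists>a e. a < e \<and> 1 \<le> e \<and> \<rho> = chain_trace n a e"
    using tr
  proof (induction \<rho> rule: rev_nonempty_induct)
    case (single x)
    then have "[x] = chain_trace n (int x) (int x + 1)"
      by (simp add: is_trace_singleton chain_trace_Cons) (simp add: chain_trace_def chain_state_def)
    then show ?case by (intro exI[of _ "int x"] exI[of _ "int x + 1"]) simp
  next
    case (snoc x \<rho>)
    then obtain a e where "a < e" "1 \<le> e" and \<rho>: "\<rho> = chain_trace n a e"
      by (auto simp: is_trace_snoc)
    moreover have "last \<rho> = chain_state n (e - 1)"
      using \<open>a < e\<close> by (simp add: \<rho> last_chain_trace)
    with snoc.prems snoc.hyps have "(chain_state n (e - 1), x) \<in> chain_trans n"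
      by (simp add: is_trace_snoc)
    ultimately show ?case by (simp add: chain_trace_snoc_step)
  qed
  then show "\<exists>a e. a < e \<and> \<rho> = chain_trace n a e" by blast
qed (auto intro: is_trace_chain_trace)

lemma initial_trace_chain_iff:
  "initial_trace (chain n s) \<rho> \<longleftrightarrow> (\<exists>a e. a < e \<and> \<rho> = chain_trace n a e \<and> chain_state n a = s)"
  unfolding initial_trace_def is_trace_chain_iff by (auto simp: hd_chain_trace) blast

lemma Pref_chain_trace:
  "\<rho> \<in> Pref (chain_trace n a e) \<longleftrightarrow> (\<exists>y. a < y \<and> y < e \<and> \<rho> = chain_trace n a y)"
proof
  assume "\<rho> \<in> Pref (chain_trace n a e)"
  then obtain i where "1 \<le> i" "i < nat (e - a)" "\<rho> = take i (chain_trace n a e)"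
    by (auto simp: Pref_def)
  then show "\<exists>y. a < y \<and> y < e \<and> \<rho> = chain_trace n a y"
    using take_chain_trace[of a "a + int i" e n] by (intro exI[of _ "a + int i"]) auto
next
  assume "\<exists>y. a < y \<and> y < e \<and> \<rho> = chain_trace n a y"
  then obtain y where "a < y" "y < e" "\<rho> = take (nat (y - a)) (chain_trace n a e)"
    using take_chain_trace[of a _ e n] by force
  then show "\<rho> \<in> Pref (chain_trace n a e)"
    unfolding Pref_def by (intro CollectI exI[of _ "nat (y - a)"]) auto
qed

lemma Suff_chain_trace:
  "\<rho> \<in> Suff (chain_trace n a e) \<longleftrightarrow> (\<exists>y. a < y \<and> y < e \<and> \<rho> = chain_trace n y e)"
proof
  assume "\<rho> \<in> Suff (chain_trace n a e)"
  then obtain i where "1 \<le> i" "i < nat (e - a)" "\<rho> = drop i (chain_trace n a e)"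
    by (auto simp: Suff_def)
  then show "\<exists>y. a < y \<and> y < e \<and> \<rho> = chain_trace n y e"
    using drop_chain_trace[of a "a + int i" e n] by (intro exI[of _ "a + int i"]) auto
next
  assume "\<exists>y. a < y \<and> y < e \<and> \<rho> = chain_trace n y e"
  then obtain y where "a < y" "y < e" "\<rho> = drop (nat (y - a)) (chain_trace n a e)"
    using drop_chain_trace[of a _ e n] by force
  then show "\<rho> \<in> Suff (chain_trace n a e)"
    unfolding Suff_def by (intro CollectI exI[of _ "nat (y - a)"]) auto
qed

lemma hs_sat_Prop_chain_trace:
  assumes "a < e"
  shows "hs_sat (chain n s) (chain_trace n a e) (Prop q) \<longleftrightarrow> top_pos n \<le> a"
proof -
  have "hs_sat (chain n s) (chain_trace n a e) (Prop q) \<longleftrightarrow> (\<forall>x\<in>{a..<e}. top_pos n \<le> x)"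
    by (auto simp: set_chain_trace chain_state_def top_pos_def)
  also have "\<dots> \<longleftrightarrow> top_pos n \<le> a" using assms by auto
  finally show ?thesis .
qed

lemma chain_state_inject:
  "1 \<le> x \<Longrightarrow> x \<le> int n + 1 \<Longrightarrow> chain_state n x = chain_state n y \<Longrightarrow> x = y"
  by (auto simp: chain_state_def)

lemma chain_trace_shift_cases:
  assumes "a < e" and eq: "chain_trace n a e = chain_trace n b (b + (e - a))"
  shows "a = b \<or> (e \<le> 1 \<and> b + (e - a) \<le> 1) \<or> (top_pos n \<le> a \<and> top_pos n \<le> b)"
proof -
  have same: "chain_state n (a + int k) = chain_state n (b + int k)" if "k < nat (e - a)" for k
    using arg_cong[OF eq, of "\<lambda>\<rho>. \<rho> ! k"] that by simp
  consider "e \<le> 1" | "a \<le> 0" "1 < e" | "1 \<le> a" "a \<le> int n + 1" | "top_pos n \<le> a"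
    by (fastforce simp: top_pos_def)
  then show ?thesis
  proof cases
    case 1
    have "chain_state n (b + (e - a) - 1) = chain_state n (e - 1)"
      using same[of "nat (e - a) - 1"] \<open>a < e\<close> by (simp add: algebra_simps)
    with 1 show ?thesis
      using chain_state_zero_iff[of n "e - 1"] chain_state_zero_iff[of n "b + (e - a) - 1"] by simp
  next
    case 2
    then have "a + int (nat (1 - a)) = 1" "nat (1 - a) < nat (e - a)" by auto
    with same[of "nat (1 - a)"] show ?thesis
      using chain_state_inject[of "a + int (nat (1 - a))" n] by fastforce
  next
    case 3
    with same[of 0] \<open>a < e\<close> chain_state_inject show ?thesis by simp
  next
    case 4
    with same[of 0] \<open>a < e\<close> show ?thesis
      using chain_state_top[of n a] chain_state_top_iff[of n b] by simp
  qed
qed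

lemma cap_equiv_chain_trace_shift:
  assumes eqv: "cap_equiv M [top_pos n, a, e] [top_pos n, a', e']"
    and "1 \<le> M" "M \<le> n + 1" "a < e"
    and eq: "chain_trace n a e = chain_trace n b (b + (e - a))"
  shows "\<exists>b'. chain_trace n a' e' = chain_trace n b' (b' + (e' - a')) \<and>
           cap_equiv M [top_pos n, b, b + (e - a)] [top_pos n, b', b' + (e' - a')]"
proof -
  from chain_trace_shift_cases[OF \<open>a < e\<close> eq]
  consider "a = b" | "e \<le> 1" "b + (e - a) \<le> 1" | "top_pos n \<le> a" "top_pos n \<le> b" by blast
  then show ?thesis
  proof cases
    case 1
    with eqv show ?thesis by (intro exI[of _ a']) simp
  next
    case 2
    have "cap_equiv M [top_pos n, a + (b - a), e + (b - a)] [top_pos n, a, e]"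
      using cap_equiv_shift_far_below[of "[a, e]" "top_pos n" M "b - a"] 2 assms(3,4)
      by (simp add: top_pos_def)
    with eqv have "cap_equiv M [top_pos n, b, b + (e - a)] [top_pos n, a', e']"
      by (simp add: cap_equiv_trans[of M _ "[top_pos n, a, e]"] algebra_simps)
    then show ?thesis by (intro exI[of _ a']) simp
  next
    case 3
    have "cap M (a - top_pos n) = cap M (a' - top_pos n)"
      and width: "cap M (e - a) = cap M (e' - a')"
      using eqv by (simp_all add: cap_equiv_simps)
    with 3 \<open>1 \<le> M\<close> have "top_pos n \<le> a'" using cap_eq_nonneg_iff by fastforce
    then have "chain_trace n a' e' = chain_trace n b (b + (e' - a'))"
      using chain_trace_at_top[of n a' b "e' - a'"] 3 by simp
    moreover have "0 \<le> e' - a'" using cap_eq_nonneg_iff[OF \<open>1 \<le> M\<close> width] \<open>a < e\<close> by simp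
    then have "cap M (b - top_pos n + (e - a)) = cap M (b - top_pos n + (e' - a'))"
      using cap_eq_add_nonneg[OF width] 3 \<open>a < e\<close> by simp
    ultimately show ?thesis using width
      by (intro exI[of _ b]) (simp add: cap_equiv_simps algebra_simps)
  qed
qed

section \<open>The game for the state-based semantics\<close>

text \<open>The cap \<open>3 ^ d\<close> leaves room for \<open>d\<close> applications of \<open>cap_equiv_extend\<close> (as
  \<open>2 * 3 ^ d + 1 \<le> 3 ^ (d + 1)\<close>); the bound \<open>3 ^ d \<le> n + 1\<close> puts all positions \<open>\<le> 1\<close>
  beyond the cap from \<open>top_pos n\<close>, which makes re-encodings along the self-loop at 0 harmless.\<close>

definition st_game_rel :: "nat \<Rightarrow> nat \<Rightarrow> nat list \<Rightarrow> nat list \<Rightarrow> bool" where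
  "st_game_rel n d \<rho> \<sigma> \<longleftrightarrow> 3 ^ d \<le> n + 1 \<and>
     (\<exists>a e a' e'. a < e \<and> a' < e' \<and> \<rho> = chain_trace n a e \<and> \<sigma> = chain_trace n a' e' \<and>
        cap_equiv (3 ^ d) [top_pos n, a, e] [top_pos n, a', e'])"

lemma st_game_relI:
  "3 ^ d \<le> n + 1 \<Longrightarrow> a < e \<Longrightarrow> a' < e' \<Longrightarrow>
   cap_equiv (3 ^ d) [top_pos n, a, e] [top_pos n, a', e'] \<Longrightarrow>
   st_game_rel n d (chain_trace n a e) (chain_trace n a' e')"
  unfolding st_game_rel_def by blast

lemma st_game_rel_sym: "st_game_rel n d \<rho> \<sigma> \<Longrightarrow> st_game_rel n d \<sigma> \<rho>"
  unfolding st_game_rel_def by (blast dest: cap_equiv_sym)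

lemma st_game_rel_converse: "(\<lambda>d. (st_game_rel n d)\<inverse>\<inverse>) = st_game_rel n"
  by (intro ext) (metis conversep_iff st_game_rel_sym)

lemma st_game_rel_Prop:
  assumes "st_game_rel n d \<rho> \<sigma>"
  shows "hs_sat (chain n i) \<rho> (Prop q) \<longleftrightarrow> hs_sat (chain n j) \<sigma> (Prop q)"
proof -
  obtain a e a' e' where "a < e" "a' < e'" "\<rho> = chain_trace n a e" "\<sigma> = chain_trace n a' e'"
    and eqv: "cap_equiv (3 ^ d) [top_pos n, a, e] [top_pos n, a', e']"
    using assms unfolding st_game_rel_def by blast
  moreover have "top_pos n \<le> a \<longleftrightarrow> top_pos n \<le> a'"
    using cap_equiv_le_iff[OF eqv, of 0 1] by simp
  ultimately show ?thesis by (simp only: hs_sat_Prop_chain_trace)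
qed

lemma st_game_rel_Pref:
  assumes "st_game_rel n (Suc d) \<rho> \<sigma>" "\<rho>' \<in> Pref \<rho>"
  shows "\<exists>\<sigma>' \<in> Pref \<sigma>. st_game_rel n d \<rho>' \<sigma>'"
proof -
  obtain a e a' e' where "a < e" and \<rho>: "\<rho> = chain_trace n a e" and \<sigma>: "\<sigma> = chain_trace n a' e'"
    and eqv: "cap_equiv (3 ^ Suc d) [top_pos n, a, e] [top_pos n, a', e']" and "3 ^ Suc d \<le> n + 1"
    using assms(1) unfolding st_game_rel_def by blast
  obtain y where "a < y" "y < e" and \<rho>': "\<rho>' = chain_trace n a y"
    using assms(2) by (auto simp: \<rho> Pref_chain_trace)
  obtain y' where eqv': "cap_equiv (3 ^ d) [top_pos n, a, e, y] [top_pos n, a', e', y']"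
    using cap_equiv_extend_pow3[OF eqv, of y] by auto
  then have "a' < y'" "y' < e'"
    using cap_equiv_less_iff[OF eqv', of 1 3] cap_equiv_less_iff[OF eqv', of 3 2] \<open>a < y\<close> \<open>y < e\<close>
    by simp_all
  moreover have "cap_equiv (3 ^ d) [top_pos n, a, y] [top_pos n, a', y']"
    using eqv' by (simp add: cap_equiv_simps)
  moreover have "3 ^ d \<le> n + 1" using \<open>3 ^ Suc d \<le> n + 1\<close> by simp
  ultimately have "st_game_rel n d \<rho>' (chain_trace n a' y')"
    unfolding \<rho>' using \<open>a < y\<close> by (intro st_game_relI)
  moreover have "chain_trace n a' y' \<in> Pref \<sigma>"
    unfolding \<sigma> Pref_chain_trace using \<open>a' < y'\<close> \<open>y' < e'\<close> by blast
  ultimately show ?thesis by blast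
qed

lemma st_game_rel_Suff:
  assumes "st_game_rel n (Suc d) \<rho> \<sigma>" "\<rho>' \<in> Suff \<rho>"
  shows "\<exists>\<sigma>' \<in> Suff \<sigma>. st_game_rel n d \<rho>' \<sigma>'"
proof -
  obtain a e a' e' where "a < e" and \<rho>: "\<rho> = chain_trace n a e" and \<sigma>: "\<sigma> = chain_trace n a' e'"
    and eqv: "cap_equiv (3 ^ Suc d) [top_pos n, a, e] [top_pos n, a', e']" and "3 ^ Suc d \<le> n + 1"
    using assms(1) unfolding st_game_rel_def by blast
  obtain y where "a < y" "y < e" and \<rho>': "\<rho>' = chain_trace n y e"
    using assms(2) by (auto simp: \<rho> Suff_chain_trace)
  obtain y' where eqv': "cap_equiv (3 ^ d) [top_pos n, a, e, y] [top_pos n, a', e', y']"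
    using cap_equiv_extend_pow3[OF eqv, of y] by auto
  then have "a' < y'" "y' < e'"
    using cap_equiv_less_iff[OF eqv', of 1 3] cap_equiv_less_iff[OF eqv', of 3 2] \<open>a < y\<close> \<open>y < e\<close>
    by simp_all
  moreover have "cap_equiv (3 ^ d) [top_pos n, y, e] [top_pos n, y', e']"
    using cap_equiv_select[OF eqv', of "[0, 3, 2]"] by simp
  moreover have "3 ^ d \<le> n + 1" using \<open>3 ^ Suc d \<le> n + 1\<close> by simp
  ultimately have "st_game_rel n d \<rho>' (chain_trace n y' e')"
    unfolding \<rho>' using \<open>y < e\<close> by (intro st_game_relI)
  moreover have "chain_trace n y' e' \<in> Suff \<sigma>"
    unfolding \<sigma> Suff_chain_trace using \<open>a' < y'\<close> \<open>y' < e'\<close> by blast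
  ultimately show ?thesis by blast
qed

lemma st_game_rel_Bbar:
  assumes "st_game_rel n (Suc d) \<rho> \<sigma>" "is_trace (chain n i) \<rho>'" "\<rho> \<in> Pref \<rho>'"
  shows "\<exists>\<sigma>'. is_trace (chain n j) \<sigma>' \<and> \<sigma> \<in> Pref \<sigma>' \<and> st_game_rel n d \<rho>' \<sigma>'"
proof -
  obtain a e a' e' where "a < e" "a' < e'"
    and \<rho>: "\<rho> = chain_trace n a e" and \<sigma>: "\<sigma> = chain_trace n a' e'"
    and eqv: "cap_equiv (3 ^ Suc d) [top_pos n, a, e] [top_pos n, a', e']" and "3 ^ Suc d \<le> n + 1"
    using assms(1) unfolding st_game_rel_def by blast
  obtain b f where "b < f" and \<rho>': "\<rho>' = chain_trace n b f"
    using assms(2) by (auto simp: is_trace_chain_iff)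
  then obtain y where "b < y" "y < f" "\<rho> = chain_trace n b y"
    using assms(3) by (auto simp: Pref_chain_trace)
  with \<open>a < e\<close> have "\<rho> = chain_trace n b (b + (e - a))" "b + (e - a) < f"
    using chain_trace_eq_imp_same_length[of n a e b y] by (simp_all add: \<rho>)
  with eqv \<open>3 ^ Suc d \<le> n + 1\<close> \<open>a < e\<close> obtain b' where
    \<sigma>_shift: "\<sigma> = chain_trace n b' (b' + (e' - a'))" and
    eqv_shift: "cap_equiv (3 ^ Suc d) [top_pos n, b, b + (e - a)] [top_pos n, b', b' + (e' - a')]"
    using cap_equiv_chain_trace_shift[of "3 ^ Suc d" n a e a' e' b] by (auto simp: \<rho> \<sigma>)
  obtain f' where eqv': "cap_equiv (3 ^ d) [top_pos n, b, b + (e - a), f]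
      [top_pos n, b', b' + (e' - a'), f']"
    using cap_equiv_extend_pow3[OF eqv_shift, of f] by auto
  with \<open>b + (e - a) < f\<close> have "b' + (e' - a') < f'"
    using cap_equiv_less_iff[OF eqv', of 2 3] by simp
  moreover have "cap_equiv (3 ^ d) [top_pos n, b, f] [top_pos n, b', f']"
    using eqv' by (simp add: cap_equiv_simps)
  moreover have "3 ^ d \<le> n + 1" using \<open>3 ^ Suc d \<le> n + 1\<close> by simp
  ultimately have "st_game_rel n d \<rho>' (chain_trace n b' f')"
    unfolding \<rho>' using \<open>b < f\<close> \<open>a' < e'\<close> by (intro st_game_relI) simp_all
  moreover have "\<sigma> \<in> Pref (chain_trace n b' f')"
    unfolding \<sigma>_shift Pref_chain_trace using \<open>b' + (e' - a') < f'\<close> \<open>a' < e'\<close>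
    by (intro exI[of _ "b' + (e' - a')"]) simp
  moreover have "is_trace (chain n j) (chain_trace n b' f')"
    using \<open>b' + (e' - a') < f'\<close> \<open>a' < e'\<close> by (intro is_trace_chain_trace) simp
  ultimately show ?thesis by blast
qed

lemma st_game_rel_Ebar:
  assumes "st_game_rel n (Suc d) \<rho> \<sigma>" "is_trace (chain n i) \<rho>'" "\<rho> \<in> Suff \<rho>'"
  shows "\<exists>\<sigma>'. is_trace (chain n j) \<sigma>' \<and> \<sigma> \<in> Suff \<sigma>' \<and> st_game_rel n d \<rho>' \<sigma>'"
proof -
  obtain a e a' e' where "a < e" "a' < e'"
    and \<rho>: "\<rho> = chain_trace n a e" and \<sigma>: "\<sigma> = chain_trace n a' e'"
    and eqv: "cap_equiv (3 ^ Suc d) [top_pos n, a, e] [top_pos n, a', e']" and "3 ^ Suc d \<le> n + 1"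
    using assms(1) unfolding st_game_rel_def by blast
  obtain b f where "b < f" and \<rho>': "\<rho>' = chain_trace n b f"
    using assms(2) by (auto simp: is_trace_chain_iff)
  then obtain y where "b < y" "y < f" "\<rho> = chain_trace n y f"
    using assms(3) by (auto simp: Suff_chain_trace)
  with \<open>a < e\<close> have "\<rho> = chain_trace n y (y + (e - a))" "f = y + (e - a)"
    using chain_trace_eq_imp_same_length[of n a e y f] by (simp_all add: \<rho>)
  with eqv \<open>3 ^ Suc d \<le> n + 1\<close> \<open>a < e\<close> obtain y' where
    \<sigma>_shift: "\<sigma> = chain_trace n y' (y' + (e' - a'))" and
    eqv_shift: "cap_equiv (3 ^ Suc d) [top_pos n, y, y + (e - a)] [top_pos n, y', y' + (e' - a')]"
    using cap_equiv_chain_trace_shift[of "3 ^ Suc d" n a e a' e' y] by (auto simp: \<rho> \<sigma>)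
  obtain b' where eqv': "cap_equiv (3 ^ d) [top_pos n, y, y + (e - a), b]
      [top_pos n, y', y' + (e' - a'), b']"
    using cap_equiv_extend_pow3[OF eqv_shift, of b] by auto
  with \<open>b < y\<close> have "b' < y'" using cap_equiv_less_iff[OF eqv', of 3 1] by simp
  moreover have "cap_equiv (3 ^ d) [top_pos n, b, f] [top_pos n, b', y' + (e' - a')]"
    using cap_equiv_select[OF eqv', of "[0, 3, 2]"] \<open>f = y + (e - a)\<close> by simp
  moreover have "3 ^ d \<le> n + 1" using \<open>3 ^ Suc d \<le> n + 1\<close> by simp
  ultimately have "st_game_rel n d \<rho>' (chain_trace n b' (y' + (e' - a')))"
    unfolding \<rho>' using \<open>b < f\<close> \<open>a' < e'\<close> by (intro st_game_relI) simp_all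
  moreover have "\<sigma> \<in> Suff (chain_trace n b' (y' + (e' - a')))"
    unfolding \<sigma>_shift Suff_chain_trace using \<open>b' < y'\<close> \<open>a' < e'\<close>
    by (intro exI[of _ y']) simp
  moreover have "is_trace (chain n j) (chain_trace n b' (y' + (e' - a')))"
    using \<open>b' < y'\<close> \<open>a' < e'\<close> by (intro is_trace_chain_trace) simp
  ultimately show ?thesis by blast
qed

lemma hs_forth_st_game_rel: "hs_forth (chain n i) (chain n j) (st_game_rel n)"
  by unfold_locales
    (fact st_game_rel_Prop st_game_rel_Pref st_game_rel_Suff st_game_rel_Bbar st_game_rel_Ebar)+

lemma st_game_rel_initial_partner:
  assumes "3 ^ Suc d \<le> n + 1" "initial_trace (chain n 0) \<sigma>"
  shows "\<exists>\<rho>. initial_trace (chain n 1) \<rho> \<and> st_game_rel n d \<rho> \<sigma>"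
proof -
  obtain a e where "a < e" "chain_state n a = 0" and \<sigma>: "\<sigma> = chain_trace n a e"
    using assms(2) by (auto simp: initial_trace_chain_iff)
  then have "a \<le> 0" by (simp add: chain_state_zero_iff)
  moreover have "int (3 ^ Suc d) \<le> int n + 1" using assms(1) by linarith
  ultimately have "cap_equiv (3 ^ Suc d) [top_pos n, a] [top_pos n, 1]"
    by (simp add: cap_equiv_simps cap_eq_lower top_pos_def)
  then obtain y where eqv: "cap_equiv (3 ^ d) [top_pos n, a, e] [top_pos n, 1, y]"
    using cap_equiv_extend_pow3[of d "[top_pos n, a]" "[top_pos n, 1]" e] by auto
  with \<open>a < e\<close> have "1 < y" using cap_equiv_less_iff[OF eqv, of 1 2] by simp
  have "3 ^ d \<le> n + 1" using assms(1) by simp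
  with \<open>a < e\<close> \<open>1 < y\<close> eqv have "st_game_rel n d (chain_trace n 1 y) \<sigma>"
    unfolding \<sigma> by (intro st_game_rel_sym[OF st_game_relI])
  moreover have "initial_trace (chain n 1) (chain_trace n 1 y)"
    unfolding initial_trace_chain_iff using \<open>1 < y\<close>
    by (intro exI[of _ 1] exI[of _ y]) (simp add: chain_state_def)
  ultimately show ?thesis by blast
qed

lemma models_st_chain_0_if_1:
  fixes \<psi> :: "'ap hs"
  assumes "3 ^ Suc (hs_depth \<psi>) \<le> n + 1" "models_st (chain n 1) \<psi>"
  shows "models_st (chain n 0) \<psi>"
  unfolding models_st_def
proof (intro allI impI)
  fix \<sigma> assume "initial_trace (chain n 0) \<sigma>"
  then obtain \<rho> where "initial_trace (chain n 1 :: (nat, 'ap) kripke) \<rho>"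
    and rel: "st_game_rel n (hs_depth \<psi>) \<rho> \<sigma>"
    using st_game_rel_initial_partner assms(1) by blast
  then have "hs_sat (chain n 1) \<rho> \<psi>" using assms(2) unfolding models_st_def by blast
  moreover have zag: "hs_forth (chain n 0) (chain n 1) (\<lambda>d. (st_game_rel n d)\<inverse>\<inverse>)"
    unfolding st_game_rel_converse by (rule hs_forth_st_game_rel)
  ultimately show "hs_sat (chain n 0) \<sigma> \<psi>"
    using hs_sat_eq_if_back_and_forth[OF hs_forth_st_game_rel zag rel order_refl] by simp
qed

section \<open>The game for the computation-tree semantics\<close>

definition chain_window :: "nat \<Rightarrow> int \<Rightarrow> int \<Rightarrow> int \<Rightarrow> nat list list" where
  "chain_window n a s e = prefixes_from (chain_trace n a e) (nat (s - a))"

lemma is_trace_chain_window: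
  assumes "chain_state n a = i" "a \<le> s" "s < e"
  shows "is_trace (comp_tree (chain n i)) (chain_window n a s e)"
proof -
  have "initial_trace (chain n i) (chain_trace n a e)"
    unfolding initial_trace_chain_iff using assms by (intro exI[of _ a] exI[of _ e]) simp
  with assms show ?thesis
    unfolding chain_window_def is_trace_comp_tree_iff
    by (intro exI[of _ "chain_trace n a e"] exI[of _ "nat (s - a)"]) simp
qed

lemma ex_offset_iff:
  "a \<le> s \<Longrightarrow> (\<exists>j. nat (s - a) < j \<and> j < nat (e - a) \<and> P (a + int j)) \<longleftrightarrow> (\<exists>y. s < y \<and> y < e \<and> P y)"
proof
  assume "a \<le> s" "\<exists>y. s < y \<and> y < e \<and> P y"
  then obtain y where "s < y" "y < e" "P y" by blast
  with \<open>a \<le> s\<close> show "\<exists>j. nat (s - a) < j \<and> j < nat (e - a) \<and> P (a + int j)"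
    by (intro exI[of _ "nat (y - a)"]) auto
qed force

lemma Pref_chain_window:
  assumes "a \<le> s" "s < e"
  shows "\<tau> \<in> Pref (chain_window n a s e) \<longleftrightarrow> (\<exists>y. s < y \<and> y < e \<and> \<tau> = chain_window n a s y)"
proof -
  have "\<tau> \<in> Pref (chain_window n a s e) \<longleftrightarrow>
        (\<exists>j. nat (s - a) < j \<and> j < nat (e - a) \<and> \<tau> = chain_window n a s (a + int j))"
    using take_chain_trace[of a "a + int j" e n for j]
    by (auto simp: chain_window_def Pref_prefixes_from)
  also have "\<dots> \<longleftrightarrow> (\<exists>y. s < y \<and> y < e \<and> \<tau> = chain_window n a s y)"
    using ex_offset_iff[OF assms(1), where P = "\<lambda>y. \<tau> = chain_window n a s y"] .
  finally show ?thesis .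
qed

lemma Suff_chain_window:
  assumes "a \<le> s" "s < e"
  shows "\<tau> \<in> Suff (chain_window n a s e) \<longleftrightarrow> (\<exists>y. s < y \<and> y < e \<and> \<tau> = chain_window n a y e)"
proof -
  have "\<tau> \<in> Suff (chain_window n a s e) \<longleftrightarrow>
        (\<exists>j. nat (s - a) < j \<and> j < nat (e - a) \<and> \<tau> = chain_window n a (a + int j) e)"
    by (auto simp: chain_window_def Suff_prefixes_from)
  also have "\<dots> \<longleftrightarrow> (\<exists>y. s < y \<and> y < e \<and> \<tau> = chain_window n a y e)"
    using ex_offset_iff[OF assms(1), where P = "\<lambda>y. \<tau> = chain_window n a y e"] .
  finally show ?thesis .
qed

lemma hs_sat_Prop_chain_window:
  assumes "a \<le> s" "s < e"
  shows "hs_sat (comp_tree (chain n i)) (chain_window n a s e) (Prop q) \<longleftrightarrow> top_pos n \<le> s"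
  using assms drop_chain_trace[of a s e n] hs_sat_Prop_chain_trace[of s e n i q]
  by (simp add: chain_window_def hs_sat_Prop_comp_tree del: hs_sat.simps)

lemma chain_window_Bbar:
  assumes "is_trace (comp_tree (chain n i :: (nat, 'ap) kripke)) \<tau>"
    and "a \<le> s" "s < e" "chain_window n a s e \<in> Pref \<tau>"
  shows "\<exists>b f. \<tau> = chain_window n b (b + (s - a)) f \<and> chain_state n b = i \<and>
           chain_trace n a e = chain_trace n b (b + (e - a)) \<and> b + (e - a) < f"
proof -
  have "nat (s - a) < length (chain_trace n a e)" using assms(2,3) by simp
  then obtain \<rho>' where "initial_trace (chain n i :: (nat, 'ap) kripke) \<rho>'"
    "chain_trace n a e \<in> Pref \<rho>'"
    and \<tau>: "\<tau> = prefixes_from \<rho>' (nat (s - a))"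
    using comp_tree_Pref_extension[OF assms(1) _ assms(4)[unfolded chain_window_def]] by blast
  moreover from this obtain b f where "b < f" "chain_state n b = i" and \<rho>': "\<rho>' = chain_trace n b f"
    by (auto simp: initial_trace_chain_iff)
  moreover from calculation obtain y where "b < y" "y < f" "chain_trace n a e = chain_trace n b y"
    by (auto simp: Pref_chain_trace)
  moreover from this have "y = b + (e - a)"
    using assms(2,3) by (intro chain_trace_eq_imp_same_length) simp_all
  ultimately show ?thesis using assms(2)
    by (intro exI[of _ b] exI[of _ f]) (simp add: chain_window_def)
qed

lemma chain_window_Ebar:
  assumes "is_trace (comp_tree (chain n i)) \<tau>" "a \<le> s" "s < e" "chain_window n a s e \<in> Suff \<tau>"
  shows "\<exists>r. a \<le> r \<and> r < s \<and> \<tau> = chain_window n a r e"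
proof -
  have "nat (s - a) < length (chain_trace n a e)" using assms(2,3) by simp
  then obtain j where "j < nat (s - a)" "\<tau> = prefixes_from (chain_trace n a e) j"
    using comp_tree_Suff_extension[OF assms(1) _ assms(4)[unfolded chain_window_def]] by blast
  then show ?thesis
    by (intro exI[of _ "a + int j"]) (auto simp: chain_window_def)
qed

lemma cap_equiv_chain_window_shift:
  assumes eqv: "cap_equiv M [top_pos n, a, s, e] ys" and "M \<le> n + 1" "a \<le> 1" "a \<le> s" "s < e"
    and shift: "chain_trace n a e = chain_trace n b (b + (e - a))"
  shows "cap_equiv M [top_pos n, b, b + (s - a), b + (e - a)] ys"
proof -
  \<comment> \<open>a window starting at a position \<open>\<le> 1\<close> can only be re-encoded inside the self-loop at 0\<close>
  from chain_trace_shift_cases[OF _ shift] \<open>a \<le> s\<close> \<open>s < e\<close> \<open>a \<le> 1\<close>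
  consider "a = b" | "e \<le> 1" "b + (e - a) \<le> 1" by (force simp: top_pos_def)
  then show ?thesis
  proof cases
    case 2
    have "cap_equiv M [top_pos n, a + (b - a), s + (b - a), e + (b - a)] [top_pos n, a, s, e]"
      using cap_equiv_shift_far_below[of "[a, s, e]" "top_pos n" M "b - a"] 2 assms(2,4,5)
      by (simp add: top_pos_def)
    with eqv show ?thesis
      by (simp add: cap_equiv_trans[of _ _ "[top_pos n, a, s, e]"] algebra_simps)
  qed (use eqv in simp)
qed

definition ct_game_rel :: "nat \<Rightarrow> nat \<Rightarrow> nat \<Rightarrow> nat \<Rightarrow> nat list list \<Rightarrow> nat list list \<Rightarrow> bool" where
  "ct_game_rel n i j d \<tau> \<tau>' \<longleftrightarrow> 3 ^ d \<le> n + 1 \<and>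
     (\<exists>a s e a' s' e'. chain_state n a = i \<and> chain_state n a' = j \<and>
        a \<le> s \<and> s < e \<and> a' \<le> s' \<and> s' < e' \<and>
        \<tau> = chain_window n a s e \<and> \<tau>' = chain_window n a' s' e' \<and>
        cap_equiv (3 ^ d) [top_pos n, a, s, e] [top_pos n, a', s', e'])"

lemma ct_game_relI:
  "3 ^ d \<le> n + 1 \<Longrightarrow> chain_state n a = i \<Longrightarrow> chain_state n a' = j \<Longrightarrow>
   a \<le> s \<Longrightarrow> s < e \<Longrightarrow> a' \<le> s' \<Longrightarrow> s' < e' \<Longrightarrow>
   cap_equiv (3 ^ d) [top_pos n, a, s, e] [top_pos n, a', s', e'] \<Longrightarrow>
   ct_game_rel n i j d (chain_window n a s e) (chain_window n a' s' e')"
  unfolding ct_game_rel_def by blast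

lemma ct_game_rel_sym: "ct_game_rel n i j d \<tau> \<tau>' \<Longrightarrow> ct_game_rel n j i d \<tau>' \<tau>"
  unfolding ct_game_rel_def by (blast dest: cap_equiv_sym)

lemma ct_game_rel_converse: "(\<lambda>d. (ct_game_rel n i j d)\<inverse>\<inverse>) = ct_game_rel n j i"
  by (intro ext) (metis conversep_iff ct_game_rel_sym)

lemma ct_game_rel_Prop:
  assumes "ct_game_rel n i j d \<tau> \<tau>'"
  shows "hs_sat (comp_tree (chain n i)) \<tau> (Prop q) \<longleftrightarrow> hs_sat (comp_tree (chain n j)) \<tau>' (Prop q)"
proof -
  obtain a s e a' s' e' where "a \<le> s" "s < e" "a' \<le> s'" "s' < e'"
    "\<tau> = chain_window n a s e" "\<tau>' = chain_window n a' s' e'"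
    and eqv: "cap_equiv (3 ^ d) [top_pos n, a, s, e] [top_pos n, a', s', e']"
    using assms unfolding ct_game_rel_def by blast
  moreover have "top_pos n \<le> s \<longleftrightarrow> top_pos n \<le> s'"
    using cap_equiv_le_iff[OF eqv, of 0 2] by simp
  ultimately show ?thesis by (simp only: hs_sat_Prop_chain_window)
qed

lemma ct_game_rel_Pref:
  assumes "ct_game_rel n i j (Suc d) \<tau> \<tau>'" "\<tau>\<^sub>1 \<in> Pref \<tau>"
  shows "\<exists>\<tau>\<^sub>1' \<in> Pref \<tau>'. ct_game_rel n i j d \<tau>\<^sub>1 \<tau>\<^sub>1'"
proof -
  obtain a s e a' s' e' where "chain_state n a = i" "chain_state n a' = j"
    "a \<le> s" "s < e" "a' \<le> s'" "s' < e'"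
    and \<tau>: "\<tau> = chain_window n a s e" and \<tau>': "\<tau>' = chain_window n a' s' e'"
    and eqv: "cap_equiv (3 ^ Suc d) [top_pos n, a, s, e] [top_pos n, a', s', e']"
    and "3 ^ Suc d \<le> n + 1"
    using assms(1) unfolding ct_game_rel_def by blast
  obtain y where "s < y" "y < e" and \<tau>\<^sub>1: "\<tau>\<^sub>1 = chain_window n a s y"
    using assms(2) \<open>a \<le> s\<close> \<open>s < e\<close> by (auto simp: \<tau> Pref_chain_window)
  obtain y' where eqv': "cap_equiv (3 ^ d) [top_pos n, a, s, e, y] [top_pos n, a', s', e', y']"
    using cap_equiv_extend_pow3[OF eqv, of y] by auto
  then have "s' < y'" "y' < e'"
    using cap_equiv_less_iff[OF eqv', of 2 4] cap_equiv_less_iff[OF eqv', of 4 3] \<open>s < y\<close> \<open>y < e\<close>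
    by simp_all
  moreover have "cap_equiv (3 ^ d) [top_pos n, a, s, y] [top_pos n, a', s', y']"
    using eqv' by (simp add: cap_equiv_simps)
  moreover have "3 ^ d \<le> n + 1" using \<open>3 ^ Suc d \<le> n + 1\<close> by simp
  ultimately have "ct_game_rel n i j d \<tau>\<^sub>1 (chain_window n a' s' y')"
    unfolding \<tau>\<^sub>1 using \<open>chain_state n a = i\<close> \<open>chain_state n a' = j\<close> \<open>a \<le> s\<close> \<open>s < y\<close> \<open>a' \<le> s'\<close>
    by (intro ct_game_relI)
  moreover have "chain_window n a' s' y' \<in> Pref \<tau>'"
    unfolding \<tau>' Pref_chain_window[OF \<open>a' \<le> s'\<close> \<open>s' < e'\<close>] using \<open>s' < y'\<close> \<open>y' < e'\<close> by blast
  ultimately show ?thesis by blast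
qed

lemma ct_game_rel_Suff:
  assumes "ct_game_rel n i j (Suc d) \<tau> \<tau>'" "\<tau>\<^sub>1 \<in> Suff \<tau>"
  shows "\<exists>\<tau>\<^sub>1' \<in> Suff \<tau>'. ct_game_rel n i j d \<tau>\<^sub>1 \<tau>\<^sub>1'"
proof -
  obtain a s e a' s' e' where "chain_state n a = i" "chain_state n a' = j"
    "a \<le> s" "s < e" "a' \<le> s'" "s' < e'"
    and \<tau>: "\<tau> = chain_window n a s e" and \<tau>': "\<tau>' = chain_window n a' s' e'"
    and eqv: "cap_equiv (3 ^ Suc d) [top_pos n, a, s, e] [top_pos n, a', s', e']"
    and "3 ^ Suc d \<le> n + 1"
    using assms(1) unfolding ct_game_rel_def by blast
  obtain y where "s < y" "y < e" and \<tau>\<^sub>1: "\<tau>\<^sub>1 = chain_window n a y e"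
    using assms(2) \<open>a \<le> s\<close> \<open>s < e\<close> by (auto simp: \<tau> Suff_chain_window)
  obtain y' where eqv': "cap_equiv (3 ^ d) [top_pos n, a, s, e, y] [top_pos n, a', s', e', y']"
    using cap_equiv_extend_pow3[OF eqv, of y] by auto
  then have "s' < y'" "y' < e'"
    using cap_equiv_less_iff[OF eqv', of 2 4] cap_equiv_less_iff[OF eqv', of 4 3] \<open>s < y\<close> \<open>y < e\<close>
    by simp_all
  moreover have "cap_equiv (3 ^ d) [top_pos n, a, y, e] [top_pos n, a', y', e']"
    using cap_equiv_select[OF eqv', of "[0, 1, 4, 3]"] by simp
  moreover have "3 ^ d \<le> n + 1" using \<open>3 ^ Suc d \<le> n + 1\<close> by simp
  ultimately have "ct_game_rel n i j d \<tau>\<^sub>1 (chain_window n a' y' e')"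
    unfolding \<tau>\<^sub>1 using \<open>chain_state n a = i\<close> \<open>chain_state n a' = j\<close>
      \<open>a \<le> s\<close> \<open>s < y\<close> \<open>y < e\<close> \<open>a' \<le> s'\<close>
    by (intro ct_game_relI) simp_all
  moreover have "chain_window n a' y' e' \<in> Suff \<tau>'"
    unfolding \<tau>' Suff_chain_window[OF \<open>a' \<le> s'\<close> \<open>s' < e'\<close>] using \<open>s' < y'\<close> \<open>y' < e'\<close> by blast
  ultimately show ?thesis by blast
qed

lemma ct_game_rel_Bbar:
  fixes \<tau>\<^sub>1 :: "nat list list"
  assumes "ct_game_rel n i j (Suc d) \<tau> \<tau>'" "i \<le> 1"
    and "is_trace (comp_tree (chain n i :: (nat, 'ap) kripke)) \<tau>\<^sub>1" "\<tau> \<in> Pref \<tau>\<^sub>1"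
  shows "\<exists>\<tau>\<^sub>1'. is_trace (comp_tree (chain n j :: (nat, 'ap) kripke)) \<tau>\<^sub>1' \<and> \<tau>' \<in> Pref \<tau>\<^sub>1' \<and>
    ct_game_rel n i j d \<tau>\<^sub>1 \<tau>\<^sub>1'"
proof -
  obtain a s e a' s' e' where "chain_state n a = i" "chain_state n a' = j"
    "a \<le> s" "s < e" "a' \<le> s'" "s' < e'"
    and \<tau>: "\<tau> = chain_window n a s e" and \<tau>': "\<tau>' = chain_window n a' s' e'"
    and eqv: "cap_equiv (3 ^ Suc d) [top_pos n, a, s, e] [top_pos n, a', s', e']"
    and "3 ^ Suc d \<le> n + 1"
    using assms(1) unfolding ct_game_rel_def by blast
  obtain b f where \<tau>\<^sub>1: "\<tau>\<^sub>1 = chain_window n b (b + (s - a)) f" and "chain_state n b = i"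
    and shift: "chain_trace n a e = chain_trace n b (b + (e - a))" and "b + (e - a) < f"
    using chain_window_Bbar[OF assms(3) \<open>a \<le> s\<close> \<open>s < e\<close>] assms(4) \<tau> by blast
  have "a \<le> 1" using \<open>chain_state n a = i\<close> \<open>i \<le> 1\<close> chain_state_le_1_iff by blast
  have "cap_equiv (3 ^ Suc d) [top_pos n, b, b + (s - a), b + (e - a)] [top_pos n, a', s', e']"
    using cap_equiv_chain_window_shift[OF eqv \<open>3 ^ Suc d \<le> n + 1\<close> \<open>a \<le> 1\<close> \<open>a \<le> s\<close> \<open>s < e\<close> shift] .
  then obtain f' where eqv': "cap_equiv (3 ^ d) [top_pos n, b, b + (s - a), b + (e - a), f]
      [top_pos n, a', s', e', f']"
    using cap_equiv_extend_pow3[of d _ _ f] by fastforce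
  with \<open>b + (e - a) < f\<close> have "e' < f'" using cap_equiv_less_iff[OF eqv', of 3 4] by simp
  moreover have "cap_equiv (3 ^ d) [top_pos n, b, b + (s - a), f] [top_pos n, a', s', f']"
    using eqv' by (simp add: cap_equiv_simps)
  moreover have "3 ^ d \<le> n + 1" using \<open>3 ^ Suc d \<le> n + 1\<close> by simp
  ultimately have "ct_game_rel n i j d \<tau>\<^sub>1 (chain_window n a' s' f')"
    unfolding \<tau>\<^sub>1 using \<open>chain_state n b = i\<close> \<open>chain_state n a' = j\<close> \<open>a \<le> s\<close> \<open>s < e\<close>
      \<open>b + (e - a) < f\<close> \<open>a' \<le> s'\<close> \<open>s' < e'\<close>
    by (intro ct_game_relI) simp_all
  moreover have "\<tau>' \<in> Pref (chain_window n a' s' f')"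
    using \<open>a' \<le> s'\<close> \<open>s' < e'\<close> \<open>e' < f'\<close> by (auto simp: \<tau>' Pref_chain_window)
  moreover have "is_trace (comp_tree (chain n j :: (nat, 'ap) kripke)) (chain_window n a' s' f')"
    using \<open>chain_state n a' = j\<close> \<open>a' \<le> s'\<close> \<open>s' < e'\<close> \<open>e' < f'\<close>
    by (intro is_trace_chain_window) simp_all
  ultimately show ?thesis by blast
qed

lemma ct_game_rel_Ebar:
  fixes \<tau>\<^sub>1 :: "nat list list"
  assumes "ct_game_rel n i j (Suc d) \<tau> \<tau>'"
    and "is_trace (comp_tree (chain n i :: (nat, 'ap) kripke)) \<tau>\<^sub>1" "\<tau> \<in> Suff \<tau>\<^sub>1"
  shows "\<exists>\<tau>\<^sub>1'. is_trace (comp_tree (chain n j :: (nat, 'ap) kripke)) \<tau>\<^sub>1' \<and> \<tau>' \<in> Suff \<tau>\<^sub>1' \<and>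
    ct_game_rel n i j d \<tau>\<^sub>1 \<tau>\<^sub>1'"
proof -
  obtain a s e a' s' e' where "chain_state n a = i" "chain_state n a' = j"
    "a \<le> s" "s < e" "a' \<le> s'" "s' < e'"
    and \<tau>: "\<tau> = chain_window n a s e" and \<tau>': "\<tau>' = chain_window n a' s' e'"
    and eqv: "cap_equiv (3 ^ Suc d) [top_pos n, a, s, e] [top_pos n, a', s', e']"
    and "3 ^ Suc d \<le> n + 1"
    using assms(1) unfolding ct_game_rel_def by blast
  obtain r where "a \<le> r" "r < s" and \<tau>\<^sub>1: "\<tau>\<^sub>1 = chain_window n a r e"
    using chain_window_Ebar[OF assms(2) \<open>a \<le> s\<close> \<open>s < e\<close>] assms(3) \<tau> by blast
  obtain r' where eqv': "cap_equiv (3 ^ d) [top_pos n, a, s, e, r] [top_pos n, a', s', e', r']"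
    using cap_equiv_extend_pow3[OF eqv, of r] by auto
  then have "a' \<le> r'" "r' < s'"
    using cap_equiv_le_iff[OF eqv', of 1 4] cap_equiv_less_iff[OF eqv', of 4 2] \<open>a \<le> r\<close> \<open>r < s\<close>
    by simp_all
  moreover have "cap_equiv (3 ^ d) [top_pos n, a, r, e] [top_pos n, a', r', e']"
    using cap_equiv_select[OF eqv', of "[0, 1, 4, 3]"] by simp
  moreover have "3 ^ d \<le> n + 1" using \<open>3 ^ Suc d \<le> n + 1\<close> by simp
  ultimately have "ct_game_rel n i j d \<tau>\<^sub>1 (chain_window n a' r' e')"
    unfolding \<tau>\<^sub>1 using \<open>chain_state n a = i\<close> \<open>chain_state n a' = j\<close>
      \<open>a \<le> r\<close> \<open>r < s\<close> \<open>s < e\<close> \<open>s' < e'\<close>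
    by (intro ct_game_relI) simp_all
  moreover have "\<tau>' \<in> Suff (chain_window n a' r' e')"
    using \<open>a' \<le> r'\<close> \<open>r' < s'\<close> \<open>s' < e'\<close> by (auto simp: \<tau>' Suff_chain_window)
  moreover have "is_trace (comp_tree (chain n j :: (nat, 'ap) kripke)) (chain_window n a' r' e')"
    using \<open>chain_state n a' = j\<close> \<open>a' \<le> r'\<close> \<open>r' < s'\<close> \<open>s' < e'\<close>
    by (intro is_trace_chain_window) simp_all
  ultimately show ?thesis by blast
qed

lemma hs_forth_ct_game_rel:
  assumes "i \<le> 1"
  shows "hs_forth (comp_tree (chain n i)) (comp_tree (chain n j)) (ct_game_rel n i j)"
  by unfold_locales
    (fact ct_game_rel_Prop ct_game_rel_Pref ct_game_rel_Suff ct_game_rel_Bbar[OF _ assms]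
      ct_game_rel_Ebar)+

lemma ct_game_rel_initial_partner:
  assumes "3 ^ Suc d \<le> n + 1" "initial_trace (comp_tree (chain n 0 :: (nat, 'ap) kripke)) \<tau>"
  shows "\<exists>\<tau>'. initial_trace (comp_tree (chain n 1 :: (nat, 'ap) kripke)) \<tau>'
    \<and> ct_game_rel n 1 0 d \<tau>' \<tau>"
proof -
  obtain a e where "a < e" "chain_state n a = 0" and \<tau>: "\<tau> = chain_window n a a e"
    using assms(2) by
    (auto simp: initial_trace_comp_tree_iff initial_trace_chain_iff chain_window_def)
  then have "a \<le> 0" by (simp add: chain_state_zero_iff)
  moreover have "int (3 ^ Suc d) \<le> int n + 1" using assms(1) by linarith
  ultimately have "cap_equiv (3 ^ Suc d) [top_pos n, a, a] [top_pos n, 1, 1]"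
    by (simp add: cap_equiv_simps cap_eq_lower top_pos_def)
  then obtain y where eqv: "cap_equiv (3 ^ d) [top_pos n, a, a, e] [top_pos n, 1, 1, y]"
    using cap_equiv_extend_pow3[of d "[top_pos n, a, a]" "[top_pos n, 1, 1]" e] by auto
  with \<open>a < e\<close> have "1 < y" using cap_equiv_less_iff[OF eqv, of 2 3] by simp
  have "3 ^ d \<le> n + 1" using assms(1) by simp
  with \<open>a < e\<close> \<open>1 < y\<close> \<open>chain_state n a = 0\<close> eqv have "ct_game_rel n 1 0 d (chain_window n 1 1 y) \<tau>"
    unfolding \<tau> by (intro ct_game_rel_sym[OF ct_game_relI]) (simp_all add: chain_state_def)
  moreover have "initial_trace (chain n 1 :: (nat, 'ap) kripke) (chain_trace n 1 y)"
    unfolding initial_trace_chain_iff using \<open>1 < y\<close>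
    by (intro exI[of _ 1] exI[of _ y]) (simp add: chain_state_def)
  then have "initial_trace (comp_tree (chain n 1 :: (nat, 'ap) kripke)) (chain_window n 1 1 y)"
    by (auto simp: initial_trace_comp_tree_iff chain_window_def)
  ultimately show ?thesis by blast
qed

lemma models_ct_chain_0_if_1:
  fixes \<psi> :: "'ap hs"
  assumes "3 ^ Suc (hs_depth \<psi>) \<le> n + 1" "models_ct (chain n 1) \<psi>"
  shows "models_ct (chain n 0) \<psi>"
  unfolding models_ct_def models_st_def
proof (intro allI impI)
  fix \<tau> assume "initial_trace (comp_tree (chain n 0 :: (nat, 'ap) kripke)) \<tau>"
  then obtain \<tau>' where "initial_trace (comp_tree (chain n 1 :: (nat, 'ap) kripke)) \<tau>'"
    and rel: "ct_game_rel n 1 0 (hs_depth \<psi>) \<tau>' \<tau>"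
    using ct_game_rel_initial_partner assms(1) by blast
  then have "hs_sat (comp_tree (chain n 1 :: (nat, 'ap) kripke)) \<tau>' \<psi>"
    using assms(2) unfolding models_ct_def models_st_def by blast
  moreover have zag: "hs_forth (comp_tree (chain n 0 :: (nat, 'ap) kripke)) (comp_tree (chain n 1))
      (\<lambda>d. (ct_game_rel n 1 0 d)\<inverse>\<inverse>)"
    unfolding ct_game_rel_converse by (rule hs_forth_ct_game_rel) simp
  ultimately show "hs_sat (comp_tree (chain n 0 :: (nat, 'ap) kripke)) \<tau> \<psi>"
    using hs_sat_eq_if_back_and_forth[OF hs_forth_ct_game_rel zag rel order_refl] by simp
qed

lemma not_expressible_if_chain_transfer:
  fixes models :: "(nat, 'ap) kripke \<Rightarrow> 'ap hs \<Rightarrow> bool"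
  assumes transfer: "\<And>\<psi> n::nat. 3 ^ Suc (hs_depth \<psi>) \<le> n + 1
      \<Longrightarrow> models (chain n 1) \<psi> \<Longrightarrow> models (chain n 0) \<psi>"
  shows "\<not> (\<exists>\<psi>. \<forall>K. finite_kripke K \<longrightarrow> (models K \<psi> \<longleftrightarrow> models_F K p))"
proof
  assume "\<exists>\<psi>. \<forall>K. finite_kripke K \<longrightarrow> (models K \<psi> \<longleftrightarrow> models_F K p)"
  then obtain \<psi> where \<psi>: "\<And>K. finite_kripke K \<Longrightarrow> models K \<psi> \<longleftrightarrow> models_F K p" by blast
  define n :: nat where "n = 3 ^ Suc (hs_depth \<psi>)"
  have "models (chain n 1) \<psi>"
    using \<psi>[OF finite_kripke_chain[of 1 n]] models_F_chain_1[of n p] by simp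
  then have "models (chain n 0) \<psi>"
    using transfer[of \<psi> n] by (simp add: n_def)
  then have "models_F (chain n 0) p"
    using \<psi>[OF finite_kripke_chain[of 0 n]] by simp
  with not_models_F_chain_0[of n p] show False by blast
qed

theorem proposition5p10:
  fixes p :: "'ap::finite"
  shows "(\<not> (\<exists>\<psi> :: 'ap hs. \<forall>K :: (nat, 'ap) kripke.
              finite_kripke K \<longrightarrow> (models_st K \<psi> \<longleftrightarrow> models_F K p)))
       \<and> (\<not> (\<exists>\<psi> :: 'ap hs. \<forall>K :: (nat, 'ap) kripke.
              finite_kripke K \<longrightarrow> (models_ct K \<psi> \<longleftrightarrow> models_F K p)))"
proof
  show "\<not> (\<exists>\<psi> :: 'ap hs. \<forall>K :: (nat, 'ap) kripke.
              finite_kripke K \<longrightarrow> (models_st K \<psi> \<longleftrightarrow> models_F K p))"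
    by (rule not_expressible_if_chain_transfer) (rule models_st_chain_0_if_1)
  show "\<not> (\<exists>\<psi> :: 'ap hs. \<forall>K :: (nat, 'ap) kripke.
              finite_kripke K \<longrightarrow> (models_ct K \<psi> \<longleftrightarrow> models_F K p))"
    by (rule not_expressible_if_chain_transfer) (rule models_ct_chain_0_if_1)
qed

end
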